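(* Let $\mathcal W$ be the even part of $W(m,n;\underline t)$ over a field of characteristic $p>3$, $m,n\ge3$. If $q=p^r$ for some $r\in\mathbb N$ (i.e. $r\ge1$), then $\mathrm{Der}_{-q}(\mathcal W)=\mathrm{span}_{\mathbb F}\{(\mathrm{ad}\,D_i)^q\mid i\in Y_0\}$.
   Context: $\mathbb F$ is a field of characteristic $p>3$; $m,n\ge 3$; $\underline t=(t_1,\dots,t_m)$ positive integers, $\pi_i=p^{t_i}-1$. $Y_0=\{1,\dots,m\}$, $Y_1=\{m+1,\dots,m+n\}$, $Y=Y_0\cup Y_1$, $\tau(r)=\bar0$ on $Y_0$, $\bar1$ on $Y_1$. $\mathfrak A=\mathfrak A(m,n;\underline t)$ is the supercommutative superalgebra with basis $x^{(\alpha)}x^u$ ($\alpha\in\mathbb N_0^m$, $\alpha_i\le\pi_i$; $u$ an increasing sequence in $Y_1$, $x^u$ the product of odd generators $x_k$, $k\in u$), divided-power multiplication (zero if some index exceeds $\pi_i$), anticommuting $x_k$, parity $|u|\bmod 2$. $D_i$ ($i\in Y_0$) sends $x^{(\alpha)}x^u\mapsto x^{(\alpha-\varepsilon_i)}x^u$, $D_k$ ($k\in Y_1$) is the odd partial derivative $\partial/\partial x_k$. $W=\{\sum_{r\in Y}f_rD_r:f_r\in\mathfrak A\}$ with bracket $[fD_r,gD_s]=fD_r(g)D_s-(-1)^{\mathrm p(fD_r)\mathrm p(gD_s)}gD_s(f)D_r$; $x^{(\alpha)}x^uD_r$ has parity $|u|+\tau(r)$ and $\mathbb Z$-degree $|\alpha|+|u|-1$.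 $\mathcal W=W_{\bar0}=\bigoplus_{i\ge-1}\mathcal W_i$ with the induced $\mathbb Z$-grading. $\mathrm{Der}_{-q}(\mathcal W)$ is the space of derivations $D$ of $\mathcal W$ with $D(\mathcal W_i)\subset\mathcal W_{i-q}$ for all $i$; $\mathrm{ad}\,D_i$ is $X\mapsto[D_i,X]$ on $\mathcal W$. *)

theory Defs
  imports Main
begin

text \<open>Basis index of the divided power superalgebra A(m,n;t): a pair (alpha, u),
  alpha : nat => nat an exponent vector supported on Y0 = {1..m} with alpha i <= p^(t i) - 1,
  u a subset of Y1 = {m+1..m+n} (an increasing sequence = a subset).
  Elements of A are functions idx => F vanishing outside the index set.\<close>

type_synonym aidx = "(nat \<Rightarrow> nat) \<times> nat set"
type_synonym widx = "(nat \<Rightarrow> nat) \<times> nat set \<times> nat"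

definition Aidx :: "nat \<Rightarrow> nat \<Rightarrow> nat \<Rightarrow> (nat \<Rightarrow> nat) \<Rightarrow> aidx set" where
  "Aidx p m n t = {(\<alpha>, u). (\<forall>i. (i \<in> {1..m} \<longrightarrow> \<alpha> i \<le> p ^ t i - 1) \<and> (i \<notin> {1..m} \<longrightarrow> \<alpha> i = 0))
                           \<and> u \<subseteq> {m+1..m+n}}"

definition amono :: "aidx \<Rightarrow> aidx \<Rightarrow> 'a::field" where
  "amono b = (\<lambda>c. if c = b then 1 else 0)"

text \<open>Sign of x^u x^v = sign * x^(u Un v) for disjoint u, v.\<close>
definition osign :: "nat set \<Rightarrow> nat set \<Rightarrow> 'a::field" where
  "osign u v = (-1) ^ card {(k, l). k \<in> u \<and> l \<in> v \<and> l < k}"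

text \<open>Product of two basis monomials (divided powers, anticommuting odd generators).\<close>
definition amul_basis :: "nat \<Rightarrow> nat \<Rightarrow> nat \<Rightarrow> (nat \<Rightarrow> nat) \<Rightarrow> aidx \<Rightarrow> aidx \<Rightarrow> aidx \<Rightarrow> 'a::field" where
  "amul_basis p m n t b1 b2 =
     (case b1 of (\<alpha>, u) \<Rightarrow> case b2 of (\<beta>, v) \<Rightarrow>
       if (\<lambda>i. \<alpha> i + \<beta> i, u \<union> v) \<in> Aidx p m n t \<and> u \<inter> v = {}
       then (\<lambda>c. (\<Prod>i\<in>{1..m}. of_nat ((\<alpha> i + \<beta> i) choose \<alpha> i)) * osign u v * amono (\<lambda>i. \<alpha> i + \<beta> i, u \<union> v) c)
       else (\<lambda>c. 0))"

definition amul :: "nat \<Rightarrow> nat \<Rightarrow> nat \<Rightarrow> (nat \<Rightarrow> nat) \<Rightarrow> (aidx \<Rightarrow> 'a::field) \<Rightarrow> (aidx \<Rightarrow> 'a) \<Rightarrow> aidx \<Rightarrow> 'a" where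
  "amul p m n t f g = (\<lambda>c. \<Sum>b1\<in>Aidx p m n t. \<Sum>b2\<in>Aidx p m n t. f b1 * g b2 * amul_basis p m n t b1 b2 c)"

text \<open>The partial derivatives D_r on basis monomials: D_i (i in Y0) lowers alpha i,
  D_k (k in Y1) is the odd left derivative d/dx_k.\<close>
definition Dbasis :: "nat \<Rightarrow> nat \<Rightarrow> nat \<Rightarrow> aidx \<Rightarrow> aidx \<Rightarrow> 'a::field" where
  "Dbasis m n r b =
     (case b of (\<alpha>, u) \<Rightarrow>
       if r \<in> {1..m} then (if 1 \<le> \<alpha> r then amono (\<alpha>(r := \<alpha> r - 1), u) else (\<lambda>c. 0))
       else if r \<in> {m+1..m+n} then
         (if r \<in> u then (\<lambda>c. (-1) ^ card {l \<in> u. l < r} * amono (\<alpha>, u - {r}) c) else (\<lambda>c. 0))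
       else (\<lambda>c. 0))"

definition Widx :: "nat \<Rightarrow> nat \<Rightarrow> nat \<Rightarrow> (nat \<Rightarrow> nat) \<Rightarrow> widx set" where
  "Widx p m n t = {(\<alpha>, u, r). (\<alpha>, u) \<in> Aidx p m n t \<and> r \<in> {1..m+n}}"

definition tau :: "nat \<Rightarrow> nat \<Rightarrow> nat" where
  "tau m r = (if r \<le> m then 0 else 1)"

text \<open>Bracket of two basis elements x^(alpha)x^u D_r and x^(beta)x^v D_s of W.\<close>
definition wbr_basis :: "nat \<Rightarrow> nat \<Rightarrow> nat \<Rightarrow> (nat \<Rightarrow> nat) \<Rightarrow> widx \<Rightarrow> widx \<Rightarrow> widx \<Rightarrow> 'a::field" where
  "wbr_basis p m n t b1 b2 =
     (case b1 of (\<alpha>, u, r) \<Rightarrow> case b2 of (\<beta>, v, s) \<Rightarrow>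
       (\<lambda>(\<gamma>, w, s').
          (if s' = s then amul p m n t (amono (\<alpha>, u)) (Dbasis m n r (\<beta>, v)) (\<gamma>, w) else 0)
          - (-1) ^ ((card u + tau m r) * (card v + tau m s))
            * (if s' = r then amul p m n t (amono (\<beta>, v)) (Dbasis m n s (\<alpha>, u)) (\<gamma>, w) else 0)))"

definition wbr :: "nat \<Rightarrow> nat \<Rightarrow> nat \<Rightarrow> (nat \<Rightarrow> nat) \<Rightarrow> (widx \<Rightarrow> 'a::field) \<Rightarrow> (widx \<Rightarrow> 'a) \<Rightarrow> widx \<Rightarrow> 'a" where
  "wbr p m n t X Y = (\<lambda>c. \<Sum>b1\<in>Widx p m n t. \<Sum>b2\<in>Widx p m n t. X b1 * Y b2 * wbr_basis p m n t b1 b2 c)"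

definition wdeg :: "nat \<Rightarrow> widx \<Rightarrow> int" where
  "wdeg m b = (case b of (\<alpha>, u, r) \<Rightarrow> int (\<Sum>i\<in>{1..m}. \<alpha> i) + int (card u) - 1)"

definition Weven :: "nat \<Rightarrow> nat \<Rightarrow> nat \<Rightarrow> (nat \<Rightarrow> nat) \<Rightarrow> (widx \<Rightarrow> 'a::field) set" where
  "Weven p m n t = {X. (\<forall>b. b \<notin> Widx p m n t \<longrightarrow> X b = 0)
      \<and> (\<forall>\<alpha> u r. X (\<alpha>, u, r) \<noteq> 0 \<longrightarrow> even (card u + tau m r))}"

definition Wcomp :: "nat \<Rightarrow> nat \<Rightarrow> nat \<Rightarrow> (nat \<Rightarrow> nat) \<Rightarrow> int \<Rightarrow> (widx \<Rightarrow> 'a::field) set" where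
  "Wcomp p m n t i = {X \<in> Weven p m n t. \<forall>b. X b \<noteq> 0 \<longrightarrow> wdeg m b = i}"

definition Der_neg :: "nat \<Rightarrow> nat \<Rightarrow> nat \<Rightarrow> (nat \<Rightarrow> nat) \<Rightarrow> nat \<Rightarrow> ((widx \<Rightarrow> 'a::field) \<Rightarrow> (widx \<Rightarrow> 'a)) set" where
  "Der_neg p m n t q = {D.
      (\<forall>X\<in>Weven p m n t. D X \<in> Weven p m n t)
    \<and> (\<forall>X\<in>Weven p m n t. \<forall>Y\<in>Weven p m n t. D (\<lambda>c. X c + Y c) = (\<lambda>c. D X c + D Y c))
    \<and> (\<forall>a. \<forall>X\<in>Weven p m n t. D (\<lambda>c. a * X c) = (\<lambda>c. a * D X c))
    \<and> (\<forall>X\<in>Weven p m n t. \<forall>Y\<in>Weven p m n t.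
          D (wbr p m n t X Y) = (\<lambda>c. wbr p m n t (D X) Y c + wbr p m n t X (D Y) c))
    \<and> (\<forall>i. \<forall>X\<in>Wcomp p m n t i. D X \<in> Wcomp p m n t (i - int q))}"

definition Dvec :: "nat \<Rightarrow> widx \<Rightarrow> 'a::field" where
  "Dvec i = (\<lambda>(\<alpha>, u, r). if \<alpha> = (\<lambda>_. 0) \<and> u = {} \<and> r = i then 1 else 0)"

end

theory Submission
  imports Defs "HOL-Computational_Algebra.Computational_Algebra" "HOL-Number_Theory.Cong"
begin

(* Write q = p^r and T_i = (ad D_i)^q.  On the basis x^(alpha) x^u D_r the operator ad D_i lowers
   alpha_i by one, so T_i lowers it by q; it is a derivation because ad D_i is one and the binomial
   coefficients (q choose k), 0 < k < q, vanish in characteristic p.  Hence every combination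
   sum c_i T_i lies in Der_{-q}.

   Conversely, let c_i be the D_i-coefficient of D(x_i^(q) D_i).  Then D' = D - sum c_i T_i is a
   derivation of degree -q which in addition kills that coefficient, and D' vanishes on every even
   basis element E, by induction on the degree of E.  Below degree q - 1 this holds for degree
   reasons.  Otherwise D'(E) is annihilated by every ad D_l, hence has constant coefficients, and it
   has the same weights as E for the toral elements x_a D_a and x_k D_k.  These weights pin down
   D'(x_i^(q) D_i) as a multiple of D_i, which is zero by the normalisation; every other E either is
   a bracket of even elements of smaller degree or has weights incompatible with its degree. *)

section \<open>Binomial coefficients and powers of derivations\<close>

lemma of_nat_CHAR_power_choose_eq_0:
  assumes "0 < CHAR('a::field)" "0 < k" "k < CHAR('a) ^ e"
  shows "of_nat (CHAR('a) ^ e choose k) = (0::'a)"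
proof -
  have "prime CHAR('a)" using assms(1) by (intro prime_CHAR_semidom)
  then have "([:1, 1:] :: 'a poly) ^ (CHAR('a) ^ e) = 1 ^ (CHAR('a) ^ e) + monom 1 1 ^ (CHAR('a) ^ e)"
    by (subst freshmans_dream'[symmetric]) (simp_all add: one_pCons monom_Suc)
  then have "coeff (([:1, 1:] :: 'a poly) ^ (CHAR('a) ^ e)) k = coeff (1 + monom 1 (CHAR('a) ^ e)) k"
    by (simp add: monom_power)
  also have "\<dots> = 0" using assms(2,3) by simp
  finally show ?thesis
    using assms(3) by (simp add: coeff_linear_poly_power)
qed

lemma binomial_Pascal_cases:
  assumes "1 \<le> a + b"
  shows "(a + b choose a) = (if 1 \<le> a then (a - 1 + b choose (a - 1)) else 0)
                          + (if 1 \<le> b then (a + (b - 1) choose a) else 0)"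
proof (cases a)
  case (Suc a')
  show ?thesis
  proof (cases b)
    case (Suc b')
    have "Suc a' + Suc b' = Suc (a' + Suc b')" by simp
    then show ?thesis using \<open>a = Suc a'\<close> Suc by (simp only: binomial_Suc_Suc) simp
  qed (use Suc in simp)
qed (use assms in simp)

lemma sum_binomial_Pascal:
  fixes f :: "nat \<Rightarrow> 'a::comm_ring_1"
  shows "(\<Sum>k\<le>N. of_nat (N choose k) * (f (Suc k) + f k)) = (\<Sum>k\<le>Suc N. of_nat (Suc N choose k) * f k)"
proof -
  have shift: "(\<Sum>k\<le>N. of_nat (N choose k) * f k) = f 0 + (\<Sum>k\<le>N. of_nat (N choose Suc k) * f (Suc k))"
  proof (cases N)
    case (Suc N')
    have "(\<Sum>k\<le>N. of_nat (N choose k) * f k) = f 0 + (\<Sum>k\<le>N'. of_nat (N choose Suc k) * f (Suc k))"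
      unfolding Suc by (subst sum.atMost_Suc_shift) simp
    also have "(\<Sum>k\<le>N'. of_nat (N choose Suc k) * f (Suc k)) = (\<Sum>k\<le>N. of_nat (N choose Suc k) * f (Suc k))"
      unfolding Suc by (simp add: binomial_eq_0 del: binomial_Suc_Suc)
    finally show ?thesis .
  qed simp
  have "(\<Sum>k\<le>Suc N. of_nat (Suc N choose k) * f k)
      = f 0 + (\<Sum>k\<le>N. of_nat (N choose k) * f (Suc k)) + (\<Sum>k\<le>N. of_nat (N choose Suc k) * f (Suc k))"
    by (subst sum.atMost_Suc_shift) (simp add: sum.distrib algebra_simps)
  then show ?thesis
    by (simp add: shift sum.distrib distrib_left add_ac)
qed

lemma linear_map_sum:
  fixes S :: "('x \<Rightarrow> 'a::comm_ring_1) \<Rightarrow> 'x \<Rightarrow> 'a"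
  assumes add: "\<And>f g. S (\<lambda>c. f c + g c) = (\<lambda>c. S f c + S g c)"
    and smul: "\<And>a f. S (\<lambda>c. a * f c) = (\<lambda>c. a * S f c)"
  shows "S (\<lambda>c. \<Sum>k\<in>K. F k c) = (\<lambda>c. \<Sum>k\<in>K. S (F k) c)"
proof (induction K rule: infinite_finite_induct)
  case (insert k K)
  then show ?case by (simp add: add)
qed (use smul[of 0 "\<lambda>_. 0"] in simp_all)

lemma funpow_derivation_Leibniz:
  fixes S :: "('x \<Rightarrow> 'a::comm_ring_1) \<Rightarrow> 'x \<Rightarrow> 'a"
  assumes add: "\<And>f g. S (\<lambda>c. f c + g c) = (\<lambda>c. S f c + S g c)"
    and smul: "\<And>a f. S (\<lambda>c. a * f c) = (\<lambda>c. a * S f c)"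
    and der: "\<And>X Y. S (B X Y) = (\<lambda>c. B (S X) Y c + B X (S Y) c)"
  shows "(S ^^ N) (B X Y) = (\<lambda>c. \<Sum>k\<le>N. of_nat (N choose k) * B ((S ^^ k) X) ((S ^^ (N - k)) Y) c)"
proof (induction N)
  case (Suc N)
  have "(S ^^ Suc N) (B X Y)
      = (\<lambda>c. \<Sum>k\<le>N. of_nat (N choose k) * S (B ((S ^^ k) X) ((S ^^ (N - k)) Y)) c)"
    unfolding funpow.simps comp_apply Suc.IH by (subst linear_map_sum[OF add smul]) (simp add: smul)
  also have "\<dots> = (\<lambda>c. \<Sum>k\<le>N. of_nat (N choose k) * (B ((S ^^ Suc k) X) ((S ^^ (Suc N - Suc k)) Y) c
                                                   + B ((S ^^ k) X) ((S ^^ (Suc N - k)) Y) c))"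
    by (intro ext sum.cong refl) (simp add: der Suc_diff_le)
  also have "\<dots> = (\<lambda>c. \<Sum>k\<le>Suc N. of_nat (Suc N choose k) * B ((S ^^ k) X) ((S ^^ (Suc N - k)) Y) c)"
    by (subst sum_binomial_Pascal) simp
  finally show ?case .
qed simp

lemma funpow_derivation_CHAR_power:
  fixes S :: "('x \<Rightarrow> 'a::field) \<Rightarrow> 'x \<Rightarrow> 'a" and e :: nat
  assumes add: "\<And>f g. S (\<lambda>c. f c + g c) = (\<lambda>c. S f c + S g c)"
    and smul: "\<And>a f. S (\<lambda>c. a * f c) = (\<lambda>c. a * S f c)"
    and der: "\<And>X Y. S (B X Y) = (\<lambda>c. B (S X) Y c + B X (S Y) c)"
    and char: "0 < CHAR('a)"
  defines "q \<equiv> CHAR('a) ^ e"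
  shows "(S ^^ q) (B X Y) = (\<lambda>c. B ((S ^^ q) X) Y c + B X ((S ^^ q) Y) c)"
proof -
  have "(S ^^ q) (B X Y) = (\<lambda>c. \<Sum>k\<le>q. of_nat (q choose k) * B ((S ^^ k) X) ((S ^^ (q - k)) Y) c)"
    by (rule funpow_derivation_Leibniz[where S = S and B = B, OF add smul der])
  also have "\<dots> = (\<lambda>c. \<Sum>k\<in>{0, q}. of_nat (q choose k) * B ((S ^^ k) X) ((S ^^ (q - k)) Y) c)"
    by (intro ext sum.mono_neutral_right)
      (auto simp: q_def of_nat_CHAR_power_choose_eq_0[OF char])
  also have "\<dots> = (\<lambda>c. B ((S ^^ q) X) Y c + B X ((S ^^ q) Y) c)"
    using char by (simp add: q_def add.commute)
  finally show ?thesis .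
qed

lemma sum_delta_unique:
  assumes "finite A" "\<And>b. b \<in> A \<Longrightarrow> P b \<longleftrightarrow> b = b0"
  shows "(\<Sum>b\<in>A. if P b then f b else 0) = (if b0 \<in> A then f b0 else 0)"
proof -
  have "(\<Sum>b\<in>A. if P b then f b else 0) = (\<Sum>b\<in>A. if b = b0 then f b else 0)"
    using assms(2) by (intro sum.cong) auto
  then show ?thesis using assms(1) by (simp add: sum.delta')
qed

lemma of_nat_choose_at_multiple_of_CHAR:
  fixes q a :: nat
  assumes q0: "of_nat q = (0::'a::field)" and two: "(2::'a) \<noteq> 0" and q2: "2 < q"
    and a: "a = q \<or> a = Suc q"
  shows "of_nat (a choose q) = (1::'a)" and "of_nat (a choose (a - (q - 1))) = (0::'a)"
proof -
  show "of_nat (a choose q) = (1::'a)"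
    using a q0 by (auto simp: binomial_Suc_n)
  show "of_nat (a choose (a - (q - 1))) = (0::'a)"
    using a
  proof
    assume "a = q"
    then show ?thesis using q0 q2 by simp
  next
    assume aq: "a = Suc q"
    have "2 * (Suc q choose 2) = Suc q * q" by (simp add: choose_two)
    then have "(2::'a) * of_nat (Suc q choose 2) = of_nat (Suc q) * of_nat q"
      by (metis of_nat_mult of_nat_numeral)
    then have "(2::'a) * of_nat (Suc q choose 2) = 0" using q0 by simp
    moreover have "a - (q - 1) = 2" using aq q2 by simp
    ultimately show ?thesis using two aq by simp
  qed
qed

lemma sum_indicator_eq_card:
  assumes "finite K" "u \<subseteq> K"
  shows "(\<Sum>k\<in>K. if k \<in> u then 1 else 0) = (card u :: nat)"
  using assms by (simp add: sum.If_cases Int_absorb1)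

section \<open>The basis of W and its bracket\<close>

lemma Aidx_iff:
  "(\<alpha>, u) \<in> Aidx p m n t \<longleftrightarrow>
    (\<forall>i. (i \<in> {1..m} \<longrightarrow> \<alpha> i \<le> p ^ t i - 1) \<and> (i \<notin> {1..m} \<longrightarrow> \<alpha> i = 0)) \<and> u \<subseteq> {m+1..m+n}"
  by (simp add: Aidx_def)

lemma Widx_iff: "(\<alpha>, u, r) \<in> Widx p m n t \<longleftrightarrow> (\<alpha>, u) \<in> Aidx p m n t \<and> r \<in> {1..m+n}"
  by (simp add: Widx_def)

lemma finite_Aidx: "finite (Aidx p m n t)"
proof -
  let ?F = "{f. \<forall>x. (x \<in> {1..m} \<longrightarrow> f x \<in> {0..Max ((\<lambda>i. p ^ t i) ` {1..m})}) \<and> (x \<notin> {1..m} \<longrightarrow> f x = (0::nat))}"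
  have "finite ?F" by (rule finite_set_of_finite_funs) auto
  moreover have "Aidx p m n t \<subseteq> ?F \<times> Pow {m+1..m+n}"
  proof
    fix x assume "x \<in> Aidx p m n t"
    then obtain \<alpha> u where x: "x = (\<alpha>, u)" and h: "(\<alpha>, u) \<in> Aidx p m n t" by (cases x) auto
    have "\<alpha> i \<le> Max ((\<lambda>i. p ^ t i) ` {1..m})" if "i \<in> {1..m}" for i
    proof -
      have "\<alpha> i \<le> p ^ t i - 1" using h that by (auto simp: Aidx_iff)
      also have "\<dots> \<le> p ^ t i" by simp
      also have "\<dots> \<le> Max ((\<lambda>i. p ^ t i) ` {1..m})" using that by (intro Max_ge) auto
      finally show ?thesis .
    qed
    then show "x \<in> ?F \<times> Pow {m+1..m+n}" using h x by (auto simp: Aidx_iff)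
  qed
  ultimately show ?thesis by (meson finite_SigmaI finite_Pow_iff finite_atLeastAtMost finite_subset)
qed

lemma finite_Widx: "finite (Widx p m n t)"
proof -
  have "Widx p m n t \<subseteq> (fst ` Aidx p m n t) \<times> ((snd ` Aidx p m n t) \<times> {1..m+n})"
    by (force simp: Widx_def image_iff)
  then show ?thesis using finite_Aidx by (meson finite_SigmaI finite_atLeastAtMost finite_imageI finite_subset)
qed

lemma one_in_Aidx [simp]: "(\<lambda>_. 0, {}) \<in> Aidx p m n t"
  by (simp add: Aidx_iff)

lemma Aidx_lower:
  assumes "(\<beta>, v) \<in> Aidx p m n t"
  shows "(\<beta>(i := \<beta> i - k), v) \<in> Aidx p m n t"
  using assms unfolding Aidx_iff by (auto simp: le_diff_conv)

lemma Aidx_remove_odd: "(\<beta>, v) \<in> Aidx p m n t \<Longrightarrow> (\<beta>, v - {r}) \<in> Aidx p m n t"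
  by (auto simp: Aidx_iff)

lemma Aidx_raise_le:
  assumes "(\<gamma>(i := \<gamma> i + N), w) \<in> Aidx p m n t" "k \<le> N"
  shows "(\<gamma>(i := \<gamma> i + k), w) \<in> Aidx p m n t"
  using assms unfolding Aidx_iff by (auto split: if_splits)

lemma finite_odd_part: "(\<alpha>, u) \<in> Aidx p m n t \<Longrightarrow> finite u"
  by (auto simp: Aidx_iff intro: finite_subset)

definition wbasis :: "widx \<Rightarrow> widx \<Rightarrow> 'a::field" where
  "wbasis b = (\<lambda>c. if c = b then 1 else 0)"

lemma Dvec_eq_wbasis: "Dvec i = wbasis (\<lambda>_. 0, {}, i)"
  by (auto simp: Dvec_def wbasis_def fun_eq_iff)

lemma wbr_wbasis:
  assumes "b1 \<in> Widx p m n t" "b2 \<in> Widx p m n t"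
  shows "wbr p m n t (wbasis b1) (wbasis b2) = (wbr_basis p m n t b1 b2 :: widx \<Rightarrow> 'a::field)"
proof
  fix c
  have "wbr p m n t (wbasis b1) (wbasis b2) c =
     (\<Sum>x\<in>Widx p m n t. if x = b1 then (\<Sum>y\<in>Widx p m n t. if y = b2 then wbr_basis p m n t x y c else 0) else (0::'a))"
    unfolding wbr_def wbasis_def by (intro sum.cong refl) (auto intro!: sum.cong)
  also have "\<dots> = wbr_basis p m n t b1 b2 c"
    using assms finite_Widx by (simp add: sum.delta')
  finally show "wbr p m n t (wbasis b1) (wbasis b2) c = (wbr_basis p m n t b1 b2 c :: 'a)" .
qed

lemma amul_amono:
  assumes "a \<in> Aidx p m n t"
  shows "amul p m n t (amono a) g = (\<lambda>c. \<Sum>b\<in>Aidx p m n t. g b * amul_basis p m n t a b c)"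
proof
  fix c
  have "amul p m n t (amono a) g c = (\<Sum>x\<in>Aidx p m n t. if x = a then (\<Sum>b\<in>Aidx p m n t. g b * amul_basis p m n t x b c) else 0)"
    unfolding amul_def amono_def by (intro sum.cong refl) (auto simp: sum_distrib_left)
  also have "\<dots> = (\<Sum>b\<in>Aidx p m n t. g b * amul_basis p m n t a b c)"
    using assms finite_Aidx by (simp add: sum.delta')
  finally show "amul p m n t (amono a) g c = (\<Sum>b\<in>Aidx p m n t. g b * amul_basis p m n t a b c)" .
qed

lemma amul_amono_amono:
  assumes "a \<in> Aidx p m n t" "b \<in> Aidx p m n t"
  shows "amul p m n t (amono a) (amono b) = (amul_basis p m n t a b :: aidx \<Rightarrow> 'a::field)"
proof
  fix c
  have "(\<Sum>ba\<in>Aidx p m n t. amono b ba * amul_basis p m n t a ba c) = (\<Sum>ba\<in>Aidx p m n t. if ba = b then amul_basis p m n t a ba c else (0::'a))"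
    by (intro sum.cong) (auto simp: amono_def)
  then show "amul p m n t (amono a) (amono b) c = (amul_basis p m n t a b c :: 'a)"
    using assms finite_Aidx by (simp add: amul_amono sum.delta')
qed

lemma amul_amono_smul:
  assumes "a \<in> Aidx p m n t" "b \<in> Aidx p m n t"
  shows "amul p m n t (amono a) (\<lambda>c. \<sigma> * amono b c) = (\<lambda>c. \<sigma> * (amul_basis p m n t a b c :: 'a::field))"
proof
  fix c
  have "(\<Sum>ba\<in>Aidx p m n t. \<sigma> * amono b ba * amul_basis p m n t a ba c) = (\<Sum>ba\<in>Aidx p m n t. if ba = b then \<sigma> * amul_basis p m n t a ba c else (0::'a))"
    by (intro sum.cong) (auto simp: amono_def)
  then show "amul p m n t (amono a) (\<lambda>c. \<sigma> * amono b c) c = \<sigma> * (amul_basis p m n t a b c :: 'a)"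
    using assms finite_Aidx by (simp add: amul_amono sum.delta')
qed

lemma amul_zero_right: "amul p m n t f (\<lambda>c. 0) = (\<lambda>c. (0::'a::field))"
  by (simp add: amul_def)

lemma amul_basis_apply:
  "amul_basis p m n t (\<alpha>, u) (\<beta>, v) (\<gamma>, w) =
    (if ((\<lambda>j. \<alpha> j + \<beta> j), u \<union> v) \<in> Aidx p m n t \<and> u \<inter> v = {} \<and> \<gamma> = (\<lambda>j. \<alpha> j + \<beta> j) \<and> w = u \<union> v
     then (\<Prod>j\<in>{1..m}. of_nat (\<alpha> j + \<beta> j choose \<alpha> j)) * osign u v else (0::'a::field))"
  by (auto simp: amul_basis_def amono_def)

lemma osign_empty1 [simp]: "osign {} v = 1"
  by (simp add: osign_def)

lemma osign_empty2 [simp]: "osign u {} = 1"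
  by (simp add: osign_def)

lemma amul_basis_one_left:
  assumes "b \<in> Aidx p m n t"
  shows "amul_basis p m n t (\<lambda>_. 0, {}) b = (amono b :: aidx \<Rightarrow> 'a::field)"
  using assms by (cases b) (simp add: amul_basis_def)

lemma amul_basis_one_right:
  assumes "b \<in> Aidx p m n t"
  shows "amul_basis p m n t b (\<lambda>_. 0, {}) = (amono b :: aidx \<Rightarrow> 'a::field)"
  using assms by (cases b) (simp add: amul_basis_def)

lemma Dbasis_zero [simp]: "Dbasis m n s (\<lambda>_. 0, {}) = (\<lambda>c. 0)"
  by (simp add: Dbasis_def)

lemma Dbasis_Y0:
  assumes "i \<in> {1..m}"
  shows "Dbasis m n i (\<beta>, v) = (if 1 \<le> \<beta> i then amono (\<beta>(i := \<beta> i - 1), v) else (\<lambda>c. 0))"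
  using assms by (simp add: Dbasis_def)

lemma Dbasis_Y1:
  assumes "r \<in> {m+1..m+n}"
  shows "Dbasis m n r (\<beta>, v) =
    (if r \<in> v then (\<lambda>c. (-1) ^ card {l \<in> v. l < r} * amono (\<beta>, v - {r}) c) else (\<lambda>c. 0))"
  using assms by (simp add: Dbasis_def)

definition mono_D_mono :: "nat \<Rightarrow> nat \<Rightarrow> nat \<Rightarrow> (nat \<Rightarrow> nat) \<Rightarrow> nat \<Rightarrow> aidx \<Rightarrow> aidx \<Rightarrow> aidx \<Rightarrow> 'a::field" where
  "mono_D_mono p m n t r a b = amul p m n t (amono a) (Dbasis m n r b)"

lemma wbr_basis_eq_mono_D_mono:
  "wbr_basis p m n t (\<alpha>, u, r) (\<beta>, v, s) (\<gamma>, w, s') =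
    (if s' = s then mono_D_mono p m n t r (\<alpha>, u) (\<beta>, v) (\<gamma>, w) else 0)
    - (-1) ^ ((card u + tau m r) * (card v + tau m s))
      * (if s' = r then mono_D_mono p m n t s (\<beta>, v) (\<alpha>, u) (\<gamma>, w) else (0::'a::field))"
  by (simp add: wbr_basis_def mono_D_mono_def)

lemma wbr_smul_left: "wbr p m n t (\<lambda>b. a * X b) Y = (\<lambda>c. a * wbr p m n t X Y c)"
  by (auto simp: wbr_def fun_eq_iff sum_distrib_left algebra_simps)

lemma wbr_smul_right: "wbr p m n t X (\<lambda>b. a * Y b) = (\<lambda>c. a * wbr p m n t X Y c)"
  by (auto simp: wbr_def fun_eq_iff sum_distrib_left algebra_simps)

lemma wbr_add_left: "wbr p m n t (\<lambda>b. X b + Z b) Y = (\<lambda>c. wbr p m n t X Y c + wbr p m n t Z Y c)"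
  by (auto simp: wbr_def fun_eq_iff sum.distrib algebra_simps)

lemma wbr_add_right: "wbr p m n t X (\<lambda>b. Y b + Z b) = (\<lambda>c. wbr p m n t X Y c + wbr p m n t X Z c)"
  by (auto simp: wbr_def fun_eq_iff sum.distrib algebra_simps)

lemma wbr_diff_left: "wbr p m n t (\<lambda>b. X b - Z b) Y = (\<lambda>c. wbr p m n t X Y c - wbr p m n t Z Y c)"
  by (auto simp: wbr_def fun_eq_iff sum_subtractf algebra_simps)

lemma wbr_diff_right: "wbr p m n t X (\<lambda>b. Y b - Z b) = (\<lambda>c. wbr p m n t X Y c - wbr p m n t X Z c)"
  by (auto simp: wbr_def fun_eq_iff sum_subtractf algebra_simps)

lemma wbr_zero_left [simp]: "wbr p m n t (\<lambda>_. 0) Y = (\<lambda>_. (0::'a::field))"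
  by (simp add: wbr_def fun_eq_iff)

lemma wbr_zero_right [simp]: "wbr p m n t X (\<lambda>_. 0) = (\<lambda>_. (0::'a::field))"
  by (simp add: wbr_def fun_eq_iff)

lemma wbr_sum_left: "wbr p m n t (\<lambda>b. \<Sum>i\<in>I. F i b) Y = (\<lambda>c. \<Sum>i\<in>I. wbr p m n t (F i) Y c)"
  by (rule linear_map_sum[where S = "\<lambda>X. wbr p m n t X Y", OF wbr_add_left wbr_smul_left])

lemma wbr_sum_right: "wbr p m n t X (\<lambda>b. \<Sum>i\<in>I. F i b) = (\<lambda>c. \<Sum>i\<in>I. wbr p m n t X (F i) c)"
  by (rule linear_map_sum[where S = "wbr p m n t X", OF wbr_add_right wbr_smul_right])

lemma wbr_lin_left:
  "wbr p m n t (\<lambda>b. \<Sum>i\<in>I. c i * F i b) Y = (\<lambda>x. \<Sum>i\<in>I. c i * wbr p m n t (F i) Y x)"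
  by (simp add: wbr_sum_left wbr_smul_left)

lemma wbr_lin_right:
  "wbr p m n t X (\<lambda>b. \<Sum>i\<in>I. c i * F i b) = (\<lambda>x. \<Sum>i\<in>I. c i * wbr p m n t X (F i) x)"
  by (simp add: wbr_sum_right wbr_smul_right)

section \<open>ad D_i is a shift of the exponent of x_i\<close>

definition wshift :: "nat \<Rightarrow> nat \<Rightarrow> nat \<Rightarrow> (nat \<Rightarrow> nat) \<Rightarrow> nat \<Rightarrow> nat \<Rightarrow> (widx \<Rightarrow> 'a) \<Rightarrow> widx \<Rightarrow> 'a::field" where
  "wshift p m n t i N X = (\<lambda>(\<gamma>, w, s).
    if (\<gamma>(i := \<gamma> i + N), w, s) \<in> Widx p m n t then X (\<gamma>(i := \<gamma> i + N), w, s) else 0)"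

lemma wshift_smul:
  "wshift p m n t i N (\<lambda>c. a * f c) = (\<lambda>c. a * wshift p m n t i N f (c::widx) :: 'a::field)"
  by (auto simp: wshift_def fun_eq_iff)

lemma wshift_add:
  "wshift p m n t i N (\<lambda>c. f c + g c)
    = (\<lambda>c. wshift p m n t i N f c + wshift p m n t i N g (c::widx) :: 'a::field)"
  by (auto simp: wshift_def fun_eq_iff)

lemma wbr_basis_Dvec:
  assumes "i \<in> {1..m}" "(\<beta>, v, s) \<in> Widx p m n t"
  shows "wbr_basis p m n t (\<lambda>_. 0, {}, i) (\<beta>, v, s) (\<gamma>, w, s') =
     (if s' = s \<and> 1 \<le> \<beta> i \<and> \<gamma> = \<beta>(i := \<beta> i - 1) \<and> w = v then 1 else (0::'a::field))"
proof -
  have A: "(\<beta>, v) \<in> Aidx p m n t" using assms(2) by (simp add: Widx_iff)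
  have B: "(\<beta>(i := \<beta> i - 1), v) \<in> Aidx p m n t" using Aidx_lower[OF A] .
  have H: "amul p m n t (amono (\<lambda>_. 0, {})) (Dbasis m n i (\<beta>, v)) = (if 1 \<le> \<beta> i then amono (\<beta>(i := \<beta> i - 1), v) else (\<lambda>c. 0::'a))"
    by (cases "1 \<le> \<beta> i") (simp_all add: Dbasis_Y0[OF assms(1)] amul_amono_amono[OF one_in_Aidx B] amul_basis_one_left[OF B] amul_zero_right del: One_nat_def)
  show ?thesis
    unfolding wbr_basis_def by (simp add: H amul_zero_right del: One_nat_def) (auto simp: amono_def)
qed

lemma wbr_Dvec_eq_wshift:
  assumes "i \<in> {1..m}"
  shows "wbr p m n t (Dvec i) X = wshift p m n t i 1 (X :: widx \<Rightarrow> 'a::field)"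
proof
  fix c :: widx
  obtain \<gamma> w s' where c: "c = (\<gamma>, w, s')" by (cases c) auto
  have z: "(\<lambda>_. 0, {}, i) \<in> Widx p m n t" using assms by (simp add: Widx_iff)
  have "wbr p m n t (Dvec i) X c = (\<Sum>b1\<in>Widx p m n t. if b1 = (\<lambda>_. 0, {}, i) then
          (\<Sum>b2\<in>Widx p m n t. X b2 * wbr_basis p m n t b1 b2 c) else 0)"
    unfolding wbr_def Dvec_eq_wbasis wbasis_def by (intro sum.cong refl) (auto simp: sum_distrib_left)
  also have "\<dots> = (\<Sum>b2\<in>Widx p m n t. X b2 * wbr_basis p m n t (\<lambda>_. 0, {}, i) b2 c)"
    using z finite_Widx by (simp add: sum.delta')
  also have "\<dots> = (\<Sum>b2\<in>Widx p m n t. if (case b2 of (\<beta>, v, s) \<Rightarrow> s' = s \<and> 1 \<le> \<beta> i \<and> \<gamma> = \<beta>(i := \<beta> i - 1) \<and> w = v)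
         then X b2 else 0)"
  proof (rule sum.cong[OF refl])
    fix b assume bW: "b \<in> Widx p m n t"
    obtain \<beta> v s where b: "b = (\<beta>, v, s)" by (cases b) auto
    show "X b * wbr_basis p m n t (\<lambda>_. 0, {}, i) b c = (if (case b of (\<beta>, v, s) \<Rightarrow> s' = s \<and> 1 \<le> \<beta> i \<and> \<gamma> = \<beta>(i := \<beta> i - 1) \<and> w = v)
         then X b else 0)"
      using bW unfolding b c by (simp add: wbr_basis_Dvec[OF assms] del: One_nat_def)
  qed
  also have "\<dots> = (if (\<gamma>(i := \<gamma> i + 1), w, s') \<in> Widx p m n t then X (\<gamma>(i := \<gamma> i + 1), w, s') else 0)"
  proof (rule sum_delta_unique[OF finite_Widx])
    fix b assume "b \<in> Widx p m n t"
    obtain \<beta> v s where b: "b = (\<beta>, v, s)" by (cases b) auto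
    show "(case b of (\<beta>, v, s) \<Rightarrow> s' = s \<and> 1 \<le> \<beta> i \<and> \<gamma> = \<beta>(i := \<beta> i - 1) \<and> w = v) \<longleftrightarrow> b = (\<gamma>(i := \<gamma> i + 1), w, s')"
      unfolding b by (auto simp: fun_eq_iff split: if_splits)
  qed
  also have "\<dots> = wshift p m n t i 1 X c" by (simp add: wshift_def c)
  finally show "wbr p m n t (Dvec i) X c = wshift p m n t i 1 X c" .
qed

lemma wshift_1_wshift:
  "wshift p m n t i 1 (wshift p m n t i N X) = wshift p m n t i (Suc N) (X :: widx \<Rightarrow> 'a::field)"
proof (rule ext, clarify)
  fix \<gamma> w s
  have "(\<gamma>(i := \<gamma> i + 1))(i := \<gamma> i + 1 + N) = \<gamma>(i := \<gamma> i + Suc N)" by (simp add: fun_eq_iff)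
  then show "wshift p m n t i 1 (wshift p m n t i N X) (\<gamma>, w, s) = wshift p m n t i (Suc N) X (\<gamma>, w, s)"
    using Aidx_raise_le[of \<gamma> i "Suc N" w p m n t 1] by (auto simp: wshift_def Widx_iff)
qed

lemma funpow_wbr_Dvec:
  assumes i: "i \<in> {1..m}" and N: "0 < N"
  shows "(wbr p m n t (Dvec i) ^^ N) X = wshift p m n t i N (X :: widx \<Rightarrow> 'a::field)"
proof -
  have "(wbr p m n t (Dvec i) ^^ Suc k) X = wshift p m n t i (Suc k) X" for k
    by (induction k) (simp_all add: wbr_Dvec_eq_wshift[OF i] wshift_1_wshift[unfolded One_nat_def])
  then show ?thesis using N by (metis Suc_pred)
qed

lemma Aidx_at_bound:
  assumes low: "(\<sigma>(i := \<sigma> i - 1), w) \<in> Aidx p m n t" and not_in: "(\<sigma>, w) \<notin> Aidx p m n t"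
    and i: "i \<in> {1..m}" and p: "0 < p"
  shows "\<sigma> i = p ^ t i"
proof -
  have bounds: "(j \<in> {1..m} \<longrightarrow> (\<sigma>(i := \<sigma> i - 1)) j \<le> p ^ t j - 1) \<and> (j \<notin> {1..m} \<longrightarrow> (\<sigma>(i := \<sigma> i - 1)) j = 0)" for j
    using low unfolding Aidx_iff by blast
  have "\<sigma> i - 1 \<le> p ^ t i - 1" using bounds[of i] i by simp
  moreover have "\<not> \<sigma> i \<le> p ^ t i - 1"
  proof
    assume "\<sigma> i \<le> p ^ t i - 1"
    then have "(j \<in> {1..m} \<longrightarrow> \<sigma> j \<le> p ^ t j - 1) \<and> (j \<notin> {1..m} \<longrightarrow> \<sigma> j = 0)" for j
      using bounds[of j] i by (cases "j = i") simp_all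
    then show False using low not_in unfolding Aidx_iff by blast
  qed
  moreover have "1 \<le> p ^ t i" using p by simp
  ultimately show ?thesis by linarith
qed

lemma amul_basis_lower_sum:
  fixes \<alpha> \<beta> :: "nat \<Rightarrow> nat"
  assumes i: "i \<in> {1..m}" and disj: "u \<inter> v = {}" and pos: "1 \<le> \<alpha> i + \<beta> i"
  defines "\<sigma> \<equiv> \<lambda>j. \<alpha> j + \<beta> j"
  shows "(if 1 \<le> \<alpha> i then amul_basis p m n t (\<alpha>(i := \<alpha> i - 1), u) (\<beta>, v) (\<sigma>(i := \<sigma> i - 1), u \<union> v) else 0)
       + (if 1 \<le> \<beta> i then amul_basis p m n t (\<alpha>, u) (\<beta>(i := \<beta> i - 1), v) (\<sigma>(i := \<sigma> i - 1), u \<union> v) else 0)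
       = (if (\<sigma>(i := \<sigma> i - 1), u \<union> v) \<in> Aidx p m n t
          then of_nat (\<sigma> i choose \<alpha> i) * (\<Prod>j\<in>{1..m}-{i}. of_nat (\<sigma> j choose \<alpha> j)) * osign u v
          else (0::'a::field))"
proof -
  define P where "P = (\<Prod>j\<in>{1..m}-{i}. of_nat (\<sigma> j choose \<alpha> j) :: 'a)"
  have first: "(if 1 \<le> \<alpha> i then amul_basis p m n t (\<alpha>(i := \<alpha> i - 1), u) (\<beta>, v) (\<sigma>(i := \<sigma> i - 1), u \<union> v) else 0)
      = (if (\<sigma>(i := \<sigma> i - 1), u \<union> v) \<in> Aidx p m n t
         then (if 1 \<le> \<alpha> i then of_nat (\<alpha> i - 1 + \<beta> i choose (\<alpha> i - 1)) else 0) * P * osign u v else (0::'a))"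
  proof (cases "1 \<le> \<alpha> i")
    case True
    have "(\<lambda>j. (\<alpha>(i := \<alpha> i - 1)) j + \<beta> j) = \<sigma>(i := \<sigma> i - 1)"
      using True by (auto simp: \<sigma>_def fun_eq_iff)
    moreover have "(\<Prod>j\<in>{1..m}. of_nat ((\<alpha>(i := \<alpha> i - 1)) j + \<beta> j choose (\<alpha>(i := \<alpha> i - 1)) j))
        = of_nat (\<alpha> i - 1 + \<beta> i choose (\<alpha> i - 1)) * P"
      unfolding P_def \<sigma>_def using i by (subst prod.remove[of _ i]) (auto intro!: prod.cong)
    ultimately show ?thesis using True disj by (simp add: amul_basis_apply)
  qed simp
  have second: "(if 1 \<le> \<beta> i then amul_basis p m n t (\<alpha>, u) (\<beta>(i := \<beta> i - 1), v) (\<sigma>(i := \<sigma> i - 1), u \<union> v) else 0)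
      = (if (\<sigma>(i := \<sigma> i - 1), u \<union> v) \<in> Aidx p m n t
         then (if 1 \<le> \<beta> i then of_nat (\<alpha> i + (\<beta> i - 1) choose \<alpha> i) else 0) * P * osign u v else (0::'a))"
  proof (cases "1 \<le> \<beta> i")
    case True
    have "(\<lambda>j. \<alpha> j + (\<beta>(i := \<beta> i - 1)) j) = \<sigma>(i := \<sigma> i - 1)"
      using True by (auto simp: \<sigma>_def fun_eq_iff)
    moreover have "(\<Prod>j\<in>{1..m}. of_nat (\<alpha> j + (\<beta>(i := \<beta> i - 1)) j choose \<alpha> j))
        = of_nat (\<alpha> i + (\<beta> i - 1) choose \<alpha> i) * P"
      unfolding P_def \<sigma>_def using i by (subst prod.remove[of _ i]) (auto intro!: prod.cong)
    ultimately show ?thesis using True disj by (simp add: amul_basis_apply)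
  qed simp
  have "of_nat (\<sigma> i choose \<alpha> i) = (if 1 \<le> \<alpha> i then of_nat (\<alpha> i - 1 + \<beta> i choose (\<alpha> i - 1)) else 0)
      + (if 1 \<le> \<beta> i then of_nat (\<alpha> i + (\<beta> i - 1) choose \<alpha> i) else (0::'a))"
    using binomial_Pascal_cases[OF pos] unfolding \<sigma>_def by (simp flip: of_nat_add)
  then show ?thesis
    unfolding first second P_def[symmetric] by (simp add: algebra_simps)
qed

lemma amul_basis_off_support:
  fixes \<alpha> \<beta> :: "nat \<Rightarrow> nat"
  assumes "\<not> (u \<inter> v = {} \<and> w = u \<union> v \<and> \<gamma>(i := \<gamma> i + 1) = (\<lambda>j. \<alpha> j + \<beta> j))"
  shows "amul_basis p m n t (\<alpha>, u) (\<beta>, v) (\<gamma>(i := \<gamma> i + 1), w) = (0::'a::field)"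
    and "1 \<le> \<alpha> i \<Longrightarrow> amul_basis p m n t (\<alpha>(i := \<alpha> i - 1), u) (\<beta>, v) (\<gamma>, w) = (0::'a)"
    and "1 \<le> \<beta> i \<Longrightarrow> amul_basis p m n t (\<alpha>, u) (\<beta>(i := \<beta> i - 1), v) (\<gamma>, w) = (0::'a)"
proof -
  show "amul_basis p m n t (\<alpha>, u) (\<beta>, v) (\<gamma>(i := \<gamma> i + 1), w) = (0::'a)"
    using assms by (auto simp: amul_basis_apply)
  show "amul_basis p m n t (\<alpha>(i := \<alpha> i - 1), u) (\<beta>, v) (\<gamma>, w) = (0::'a)" if "1 \<le> \<alpha> i"
  proof -
    have "\<gamma>(i := \<gamma> i + 1) = (\<lambda>j. \<alpha> j + \<beta> j)" if "\<gamma> = (\<lambda>j. (\<alpha>(i := \<alpha> i - 1)) j + \<beta> j)"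
      using \<open>1 \<le> \<alpha> i\<close> that by (auto simp: fun_eq_iff)
    then show ?thesis using assms by (auto simp: amul_basis_apply)
  qed
  show "amul_basis p m n t (\<alpha>, u) (\<beta>(i := \<beta> i - 1), v) (\<gamma>, w) = (0::'a)" if "1 \<le> \<beta> i"
  proof -
    have "\<gamma>(i := \<gamma> i + 1) = (\<lambda>j. \<alpha> j + \<beta> j)" if "\<gamma> = (\<lambda>j. \<alpha> j + (\<beta>(i := \<beta> i - 1)) j)"
      using \<open>1 \<le> \<beta> i\<close> that by (auto simp: fun_eq_iff)
    then show ?thesis using assms by (auto simp: amul_basis_apply)
  qed
qed

lemma amul_basis_Leibniz:
  fixes \<alpha> \<beta> :: "nat \<Rightarrow> nat"
  assumes A: "(\<alpha>, u) \<in> Aidx p m n t" and B: "(\<beta>, v) \<in> Aidx p m n t" and i: "i \<in> {1..m}"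
    and ch: "CHAR('a::field) = p" and p: "0 < p"
  shows "(if (\<gamma>(i := \<gamma> i + 1), w) \<in> Aidx p m n t
      then amul_basis p m n t (\<alpha>, u) (\<beta>, v) (\<gamma>(i := \<gamma> i + 1), w) else 0)
      = (if 1 \<le> \<alpha> i then amul_basis p m n t (\<alpha>(i := \<alpha> i - 1), u) (\<beta>, v) (\<gamma>, w) else 0)
      + (if 1 \<le> \<beta> i then amul_basis p m n t (\<alpha>, u) (\<beta>(i := \<beta> i - 1), v) (\<gamma>, w) else (0::'a))"
proof -
  define \<sigma> where "\<sigma> = (\<lambda>j. \<alpha> j + \<beta> j)"
  show ?thesis
  proof (cases "u \<inter> v = {} \<and> w = u \<union> v \<and> \<gamma>(i := \<gamma> i + 1) = \<sigma>")
    case False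
    then show ?thesis using amul_basis_off_support[where 'a = 'a, of u v w \<gamma> i \<alpha> \<beta>] by (simp add: \<sigma>_def)
  next
    case True
    then have disj: "u \<inter> v = {}" and w: "w = u \<union> v" and raise: "\<gamma>(i := \<gamma> i + 1) = \<sigma>"
      by auto
    have pos: "1 \<le> \<alpha> i + \<beta> i" using fun_cong[OF raise, of i] by (simp add: \<sigma>_def)
    have \<gamma>: "\<gamma> = \<sigma>(i := \<sigma> i - 1)"
    proof
      fix x
      show "\<gamma> x = (\<sigma>(i := \<sigma> i - 1)) x" using fun_cong[OF raise, of x] by (cases "x = i") auto
    qed
    define P where "P = (\<Prod>j\<in>{1..m}-{i}. of_nat (\<sigma> j choose \<alpha> j) :: 'a)"
    have "(\<Prod>j\<in>{1..m}. of_nat (\<alpha> j + \<beta> j choose \<alpha> j)) = of_nat (\<sigma> i choose \<alpha> i) * P"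
      unfolding P_def \<sigma>_def using i by (subst prod.remove[of _ i]) auto
    then have lhs: "(if (\<gamma>(i := \<gamma> i + 1), w) \<in> Aidx p m n t then amul_basis p m n t (\<alpha>, u) (\<beta>, v) (\<gamma>(i := \<gamma> i + 1), w) else 0)
        = (if (\<sigma>, w) \<in> Aidx p m n t then of_nat (\<sigma> i choose \<alpha> i) * P * osign u v else 0)"
      using disj w raise by (simp add: amul_basis_apply \<sigma>_def[symmetric])
    have rhs: "(if 1 \<le> \<alpha> i then amul_basis p m n t (\<alpha>(i := \<alpha> i - 1), u) (\<beta>, v) (\<gamma>, w) else 0)
        + (if 1 \<le> \<beta> i then amul_basis p m n t (\<alpha>, u) (\<beta>(i := \<beta> i - 1), v) (\<gamma>, w) else 0)
        = (if (\<gamma>, w) \<in> Aidx p m n t then of_nat (\<sigma> i choose \<alpha> i) * P * osign u v else (0::'a))"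
      unfolding \<gamma> w P_def \<sigma>_def
      by (rule amul_basis_lower_sum[where \<alpha> = \<alpha> and \<beta> = \<beta>, OF i disj pos])
    \<comment> \<open>The two sides can only differ when the raised exponent leaves the truncation range,
      i.e. \<open>\<sigma> i = p ^ t i\<close>, and then the divided-power coefficient vanishes.\<close>
    have "of_nat (\<sigma> i choose \<alpha> i) = (0::'a)" if "(\<gamma>, w) \<in> Aidx p m n t" "(\<sigma>, w) \<notin> Aidx p m n t"
    proof -
      have top: "\<sigma> i = p ^ t i" using Aidx_at_bound[OF _ that(2) i p] that(1) by (simp add: \<gamma>)
      have "\<alpha> i \<le> p ^ t i - 1" "\<beta> i \<le> p ^ t i - 1" using A B i by (auto simp: Aidx_iff)
      moreover have "1 \<le> p ^ t i" using p by simp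
      ultimately have "0 < \<alpha> i" "\<alpha> i < p ^ t i" using top unfolding \<sigma>_def by linarith+
      then show ?thesis using top of_nat_CHAR_power_choose_eq_0[where 'a = 'a, of "\<alpha> i" "t i"] ch p by simp
    qed
    moreover have "(\<gamma>, w) \<in> Aidx p m n t" if "(\<sigma>, w) \<in> Aidx p m n t"
      using Aidx_lower[OF that] by (simp add: \<gamma>)
    ultimately show ?thesis unfolding lhs rhs by auto
  qed
qed

lemma mono_D_mono_Leibniz_Y0:
  fixes \<alpha> \<beta> :: "nat \<Rightarrow> nat"
  assumes A: "(\<alpha>, u) \<in> Aidx p m n t" and B: "(\<beta>, v) \<in> Aidx p m n t" and i: "i \<in> {1..m}"
    and r: "r \<in> {1..m}"
    and ch: "CHAR('a::field) = p" and p: "0 < p"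
  shows "(if (\<gamma>(i := \<gamma> i + 1), w) \<in> Aidx p m n t then mono_D_mono p m n t r (\<alpha>, u) (\<beta>, v) (\<gamma>(i := \<gamma> i + 1), w) else 0)
      = (if 1 \<le> \<alpha> i then mono_D_mono p m n t r (\<alpha>(i := \<alpha> i - 1), u) (\<beta>, v) (\<gamma>, w) else 0)
      + (if 1 \<le> \<beta> i then mono_D_mono p m n t r (\<alpha>, u) (\<beta>(i := \<beta> i - 1), v) (\<gamma>, w) else (0::'a))"
proof -
  have A': "(\<alpha>(i := \<alpha> i - 1), u) \<in> Aidx p m n t" using Aidx_lower[OF A] .
  note D = Dbasis_Y0[OF r]
  show ?thesis
  proof (cases "1 \<le> \<beta> r")
    case br: True
    define c where "c = \<beta>(r := \<beta> r - 1)"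
    have C: "(c, v) \<in> Aidx p m n t" unfolding c_def using Aidx_lower[OF B] .
    note amul_Leibniz = amul_basis_Leibniz[OF A C i ch p, of \<gamma> w]
    have mono_eq: "mono_D_mono p m n t r (\<alpha>, u) (\<beta>, v) = (amul_basis p m n t (\<alpha>, u) (c, v) :: aidx \<Rightarrow> 'a)"
      unfolding mono_D_mono_def D using br amul_amono_amono[OF A C] by (simp add: c_def)
    have mono_lower_\<alpha>: "mono_D_mono p m n t r (\<alpha>(i := \<alpha> i - 1), u) (\<beta>, v) = (amul_basis p m n t (\<alpha>(i := \<alpha> i - 1), u) (c, v) :: aidx \<Rightarrow> 'a)"
      unfolding mono_D_mono_def D using br amul_amono_amono[OF A' C] by (simp add: c_def)
    have mono_lower_\<beta>: "(if 1 \<le> \<beta> i then mono_D_mono p m n t r (\<alpha>, u) (\<beta>(i := \<beta> i - 1), v) (\<gamma>, w) else 0)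
        = (if 1 \<le> c i then amul_basis p m n t (\<alpha>, u) (c(i := c i - 1), v) (\<gamma>, w) else (0::'a))"
    proof (cases "r = i")
      case True
      have c_lower: "c(i := c i - 1) = (\<beta>(i := \<beta> i - 1))(r := (\<beta>(i := \<beta> i - 1)) r - 1)"
        using True by (simp add: c_def)
      show ?thesis
        using Aidx_lower[OF B, of i "Suc (Suc 0)"] unfolding mono_D_mono_def D c_lower using True br by (simp add: c_def amul_amono_amono[OF A] amul_zero_right)
    next
      case False
      have c_lower: "c(i := c i - 1) = (\<beta>(i := \<beta> i - 1))(r := (\<beta>(i := \<beta> i - 1)) r - 1)"
        using False by (auto simp: c_def fun_eq_iff)
      have c_at_i: "c i = \<beta> i" using False by (simp add: c_def)
      have D_lower: "Dbasis m n r (\<beta>(i := \<beta> i - 1), v) = amono (c(i := c i - 1), v)"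
        unfolding D c_lower using False br by simp
      have mono_lower: "mono_D_mono p m n t r (\<alpha>, u) (\<beta>(i := \<beta> i - 1), v) = (amul_basis p m n t (\<alpha>, u) (c(i := c i - 1), v) :: aidx \<Rightarrow> 'a)"
        unfolding mono_D_mono_def D_lower using amul_amono_amono[OF A Aidx_lower[OF C]] .
      show ?thesis unfolding mono_lower c_at_i ..
    qed
    show ?thesis unfolding mono_eq mono_lower_\<alpha> mono_lower_\<beta> using amul_Leibniz by simp
  next
    case br: False
    have mono_eq: "mono_D_mono p m n t r a (\<beta>, v) = (\<lambda>c. 0::'a)" for a
      unfolding mono_D_mono_def D using br by (simp add: amul_zero_right)
    have mono_lower_\<beta>: "(if 1 \<le> \<beta> i then mono_D_mono p m n t r (\<alpha>, u) (\<beta>(i := \<beta> i - 1), v) (\<gamma>, w) else (0::'a)) = 0"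
      unfolding mono_D_mono_def D using br by (cases "r = i") (auto simp: amul_zero_right)
    show ?thesis unfolding mono_eq mono_lower_\<beta> by simp
  qed
qed

lemma mono_D_mono_Leibniz_Y1:
  fixes \<alpha> \<beta> :: "nat \<Rightarrow> nat"
  assumes A: "(\<alpha>, u) \<in> Aidx p m n t" and B: "(\<beta>, v) \<in> Aidx p m n t" and i: "i \<in> {1..m}"
    and r: "r \<in> {m+1..m+n}"
    and ch: "CHAR('a::field) = p" and p: "0 < p"
  shows "(if (\<gamma>(i := \<gamma> i + 1), w) \<in> Aidx p m n t then mono_D_mono p m n t r (\<alpha>, u) (\<beta>, v) (\<gamma>(i := \<gamma> i + 1), w) else 0)
      = (if 1 \<le> \<alpha> i then mono_D_mono p m n t r (\<alpha>(i := \<alpha> i - 1), u) (\<beta>, v) (\<gamma>, w) else 0)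
      + (if 1 \<le> \<beta> i then mono_D_mono p m n t r (\<alpha>, u) (\<beta>(i := \<beta> i - 1), v) (\<gamma>, w) else (0::'a))"
proof -
  have A': "(\<alpha>(i := \<alpha> i - 1), u) \<in> Aidx p m n t" using Aidx_lower[OF A] .
  have B': "(\<beta>(i := \<beta> i - 1), v) \<in> Aidx p m n t" using Aidx_lower[OF B] .
  note D = Dbasis_Y1[OF r]
  show ?thesis
  proof (cases "r \<in> v")
    case rv: True
    define sg where "sg = ((-1) ^ card {l \<in> v. l < r} :: 'a)"
    have C: "(\<beta>, v - {r}) \<in> Aidx p m n t" using Aidx_remove_odd[OF B] .
    have C': "(\<beta>(i := \<beta> i - 1), v - {r}) \<in> Aidx p m n t" using Aidx_remove_odd[OF B'] .
    note amul_Leibniz = amul_basis_Leibniz[OF A C i ch p, of \<gamma> w]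
    have mono_eq: "mono_D_mono p m n t r a (\<beta>, v) = (\<lambda>c. sg * amul_basis p m n t a (\<beta>, v - {r}) c)" if "a \<in> Aidx p m n t" for a
      unfolding mono_D_mono_def D sg_def using rv amul_amono_smul[OF that C] by simp
    have mono_lower_\<beta>: "mono_D_mono p m n t r (\<alpha>, u) (\<beta>(i := \<beta> i - 1), v) = (\<lambda>c. sg * amul_basis p m n t (\<alpha>, u) (\<beta>(i := \<beta> i - 1), v - {r}) c)"
      unfolding mono_D_mono_def D sg_def using rv amul_amono_smul[OF A C'] by simp
    have if_smul: "\<And>P x. (if P then sg * x else 0) = sg * (if P then x else (0::'a))" by simp
    show ?thesis unfolding mono_eq[OF A] mono_eq[OF A'] mono_lower_\<beta>
      by (simp only: if_smul amul_Leibniz distrib_left[symmetric])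
  next
    case rv: False
    have mono_eq: "mono_D_mono p m n t r a (\<beta>', v) = (\<lambda>c. 0::'a)" for a \<beta>'
      unfolding mono_D_mono_def D using rv by (simp add: amul_zero_right)
    show ?thesis unfolding mono_eq by simp
  qed
qed

lemma mono_D_mono_Leibniz:
  fixes \<alpha> \<beta> :: "nat \<Rightarrow> nat"
  assumes "(\<alpha>, u) \<in> Aidx p m n t" "(\<beta>, v) \<in> Aidx p m n t" "i \<in> {1..m}" "r \<in> {1..m+n}"
    "CHAR('a::field) = p" "0 < p"
  shows "(if (\<gamma>(i := \<gamma> i + 1), w) \<in> Aidx p m n t then mono_D_mono p m n t r (\<alpha>, u) (\<beta>, v) (\<gamma>(i := \<gamma> i + 1), w) else 0)
      = (if 1 \<le> \<alpha> i then mono_D_mono p m n t r (\<alpha>(i := \<alpha> i - 1), u) (\<beta>, v) (\<gamma>, w) else 0)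
      + (if 1 \<le> \<beta> i then mono_D_mono p m n t r (\<alpha>, u) (\<beta>(i := \<beta> i - 1), v) (\<gamma>, w) else (0::'a))"
proof (cases "r \<in> {1..m}")
  case True
  then show ?thesis using mono_D_mono_Leibniz_Y0 assms by blast
next
  case False
  then have "r \<in> {m+1..m+n}" using assms(4) by auto
  then show ?thesis using mono_D_mono_Leibniz_Y1 assms by blast
qed

definition widx_up :: "nat \<Rightarrow> widx \<Rightarrow> widx" where
  "widx_up i b = (case b of (\<beta>, v, s) \<Rightarrow> (\<beta>(i := \<beta> i + 1), v, s))"

definition widx_down :: "nat \<Rightarrow> widx \<Rightarrow> widx" where
  "widx_down i b = (case b of (\<beta>, v, s) \<Rightarrow> (\<beta>(i := \<beta> i - 1), v, s))"

lemma wshift_1_apply: "wshift p m n t i 1 X b = (if widx_up i b \<in> Widx p m n t then X (widx_up i b) else 0)"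
  by (cases b) (simp add: wshift_def widx_up_def)

lemma sum_wshift_1:
  "(\<Sum>b\<in>Widx p m n t. wshift p m n t i 1 X b * G b) =
   (\<Sum>b\<in>Widx p m n t. if 1 \<le> fst b i then X b * G (widx_down i b) else (0::'a::field))"
proof -
  have "(\<Sum>b\<in>Widx p m n t. wshift p m n t i 1 X b * G b) = (\<Sum>b\<in>{b\<in>Widx p m n t. widx_up i b \<in> Widx p m n t}. X (widx_up i b) * G b)"
  proof -
    have "(\<Sum>b\<in>Widx p m n t. wshift p m n t i 1 X b * G b) = (\<Sum>b\<in>Widx p m n t. if widx_up i b \<in> Widx p m n t then X (widx_up i b) * G b else 0)"
      by (intro sum.cong refl) (simp only: wshift_1_apply, simp)
    then show ?thesis by (simp add: sum.inter_filter[OF finite_Widx])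
  qed
  also have "\<dots> = (\<Sum>b\<in>{b\<in>Widx p m n t. 1 \<le> fst b i}. X b * G (widx_down i b))"
  proof (rule sum.reindex_bij_witness[of _ "widx_down i" "widx_up i"])
    fix b assume "b \<in> {b \<in> Widx p m n t. widx_up i b \<in> Widx p m n t}"
    then show "widx_down i (widx_up i b) = b" "widx_up i b \<in> {b \<in> Widx p m n t. 1 \<le> fst b i}"
      by (cases b; simp add: widx_up_def widx_down_def)+
  next
    fix b assume b: "b \<in> {b \<in> Widx p m n t. 1 \<le> fst b i}"
    then show "widx_up i (widx_down i b) = b" by (cases b) (auto simp: widx_up_def widx_down_def fun_eq_iff)
    have "widx_up i (widx_down i b) = b" using b by (cases b) (auto simp: widx_up_def widx_down_def fun_eq_iff)
    moreover have "widx_down i b \<in> Widx p m n t" using b by (cases b) (auto simp: widx_down_def Widx_iff intro: Aidx_lower)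
    ultimately show "widx_down i b \<in> {b \<in> Widx p m n t. widx_up i b \<in> Widx p m n t}" using b by simp
  next
    fix b assume b: "b \<in> {b \<in> Widx p m n t. widx_up i b \<in> Widx p m n t}"
    then show "X (widx_up i b) * G (widx_down i (widx_up i b)) = X (widx_up i b) * G b"
      by (cases b) (simp add: widx_up_def widx_down_def)
  qed
  also have "\<dots> = (\<Sum>b\<in>Widx p m n t. if 1 \<le> fst b i then X b * G (widx_down i b) else 0)"
    by (simp add: sum.inter_filter[OF finite_Widx])
  finally show ?thesis .
qed

lemma wbr_basis_Leibniz:
  assumes b1: "b1 \<in> Widx p m n t" and b2: "b2 \<in> Widx p m n t" and i: "i \<in> {1..m}"
    and ch: "CHAR('a::field) = p" and p: "0 < p"
  shows "(if widx_up i c \<in> Widx p m n t then wbr_basis p m n t b1 b2 (widx_up i c) else 0)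
     = (if 1 \<le> fst b1 i then wbr_basis p m n t (widx_down i b1) b2 c else 0)
     + (if 1 \<le> fst b2 i then wbr_basis p m n t b1 (widx_down i b2) c else (0::'a))"
proof -
  obtain \<alpha> u r where b1_eq: "b1 = (\<alpha>, u, r)" by (cases b1) auto
  obtain \<beta> v s where b2_eq: "b2 = (\<beta>, v, s)" by (cases b2) auto
  obtain \<gamma> w s' where c_eq: "c = (\<gamma>, w, s')" by (cases c) auto
  have A: "(\<alpha>, u) \<in> Aidx p m n t" "r \<in> {1..m+n}" using b1 by (auto simp: b1_eq Widx_iff)
  have B: "(\<beta>, v) \<in> Aidx p m n t" "s \<in> {1..m+n}" using b2 by (auto simp: b2_eq Widx_iff)
  define sg where "sg = ((-1) ^ ((card u + tau m r) * (card v + tau m s)) :: 'a)"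
  note S1 = mono_D_mono_Leibniz[OF A(1) B(1) i A(2) ch p, of \<gamma> w]
  note S2 = mono_D_mono_Leibniz[OF B(1) A(1) i B(2) ch p, of \<gamma> w]
  have "(if (\<gamma>(i := \<gamma> i + 1), w, s') \<in> Widx p m n t then wbr_basis p m n t (\<alpha>, u, r) (\<beta>, v, s) (\<gamma>(i := \<gamma> i + 1), w, s') else 0)
      = (if 1 \<le> \<alpha> i then wbr_basis p m n t (\<alpha>(i := \<alpha> i - 1), u, r) (\<beta>, v, s) (\<gamma>, w, s') else 0)
      + (if 1 \<le> \<beta> i then wbr_basis p m n t (\<alpha>, u, r) (\<beta>(i := \<beta> i - 1), v, s) (\<gamma>, w, s') else (0::'a))"
  proof (cases "s' \<in> {1..m+n}")
    case True
    have L: "(if (\<gamma>(i := \<gamma> i + 1), w, s') \<in> Widx p m n t then wbr_basis p m n t (\<alpha>, u, r) (\<beta>, v, s) (\<gamma>(i := \<gamma> i + 1), w, s') else 0)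
      = (if s' = s then (if (\<gamma>(i := \<gamma> i + 1), w) \<in> Aidx p m n t then mono_D_mono p m n t r (\<alpha>, u) (\<beta>, v) (\<gamma>(i := \<gamma> i + 1), w) else 0) else 0)
        - sg * (if s' = r then (if (\<gamma>(i := \<gamma> i + 1), w) \<in> Aidx p m n t then mono_D_mono p m n t s (\<beta>, v) (\<alpha>, u) (\<gamma>(i := \<gamma> i + 1), w) else 0) else (0::'a))"
      using True by (simp add: Widx_iff wbr_basis_eq_mono_D_mono sg_def)
    show ?thesis unfolding L S1 S2
      by (simp add: wbr_basis_eq_mono_D_mono sg_def algebra_simps)
  next
    case False
    then have "s' \<noteq> s" "s' \<noteq> r" using A B by auto
    then show ?thesis using False by (simp add: Widx_iff wbr_basis_eq_mono_D_mono)
  qed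
  then show ?thesis unfolding b1_eq b2_eq c_eq widx_up_def widx_down_def prod.case fst_conv .
qed

lemma wshift_1_derivation:
  assumes i: "i \<in> {1..m}" and ch: "CHAR('a::field) = p" and p: "0 < p"
  shows "wshift p m n t i 1 (wbr p m n t X Y)
    = (\<lambda>c. wbr p m n t (wshift p m n t i 1 X) Y c + wbr p m n t X (wshift p m n t i 1 (Y :: widx \<Rightarrow> 'a)) c)"
proof
  fix c
  let ?W = "Widx p m n t"
  have "wshift p m n t i 1 (wbr p m n t X Y) c = (\<Sum>b1\<in>?W. \<Sum>b2\<in>?W. X b1 * Y b2 * (if widx_up i c \<in> ?W then wbr_basis p m n t b1 b2 (widx_up i c) else 0))"
    by (simp only: wshift_1_apply) (simp add: wbr_def)
  also have "\<dots> = (\<Sum>b1\<in>?W. \<Sum>b2\<in>?W. X b1 * Y b2 * ((if 1 \<le> fst b1 i then wbr_basis p m n t (widx_down i b1) b2 c else 0)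
     + (if 1 \<le> fst b2 i then wbr_basis p m n t b1 (widx_down i b2) c else 0)))"
    by (intro sum.cong refl) (simp add: wbr_basis_Leibniz[OF _ _ i ch p])
  also have "\<dots> = (\<Sum>b1\<in>?W. \<Sum>b2\<in>?W. if 1 \<le> fst b1 i then X b1 * (Y b2 * wbr_basis p m n t (widx_down i b1) b2 c) else 0)
      + (\<Sum>b1\<in>?W. X b1 * (\<Sum>b2\<in>?W. if 1 \<le> fst b2 i then Y b2 * wbr_basis p m n t b1 (widx_down i b2) c else 0))"
  proof -
    have pw: "\<And>x y A B a b. x * y * ((if A then a else 0) + (if B then b else 0)) = (if A then x * (y * a) else 0) + x * (if B then y * b else (0::'a))"
      by (simp add: algebra_simps)
    show ?thesis unfolding pw sum.distrib sum_distrib_left[symmetric] ..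
  qed
  also have "(\<Sum>b1\<in>?W. \<Sum>b2\<in>?W. if 1 \<le> fst b1 i then X b1 * (Y b2 * wbr_basis p m n t (widx_down i b1) b2 c) else 0)
      = wbr p m n t (wshift p m n t i 1 X) Y c"
  proof -
    have "wbr p m n t (wshift p m n t i 1 X) Y c = (\<Sum>b1\<in>?W. wshift p m n t i 1 X b1 * (\<Sum>b2\<in>?W. Y b2 * wbr_basis p m n t b1 b2 c))"
      by (simp add: wbr_def sum_distrib_left mult.assoc)
    also have "\<dots> = (\<Sum>b1\<in>?W. if 1 \<le> fst b1 i then X b1 * (\<Sum>b2\<in>?W. Y b2 * wbr_basis p m n t (widx_down i b1) b2 c) else 0)"
      by (rule sum_wshift_1)
    finally have E: "wbr p m n t (wshift p m n t i 1 X) Y c = (\<Sum>b1\<in>?W. if 1 \<le> fst b1 i then X b1 * (\<Sum>b2\<in>?W. Y b2 * wbr_basis p m n t (widx_down i b1) b2 c) else 0)" .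
    show ?thesis unfolding E by (intro sum.cong refl) (simp add: sum_distrib_left)
  qed
  also have "(\<Sum>b1\<in>?W. X b1 * (\<Sum>b2\<in>?W. if 1 \<le> fst b2 i then Y b2 * wbr_basis p m n t b1 (widx_down i b2) c else 0))
      = wbr p m n t X (wshift p m n t i 1 Y) c"
  proof -
    have "wbr p m n t X (wshift p m n t i 1 Y) c = (\<Sum>b1\<in>?W. X b1 * (\<Sum>b2\<in>?W. wshift p m n t i 1 Y b2 * wbr_basis p m n t b1 b2 c))"
      by (simp add: wbr_def sum_distrib_left mult.assoc)
    also have "\<dots> = (\<Sum>b1\<in>?W. X b1 * (\<Sum>b2\<in>?W. if 1 \<le> fst b2 i then Y b2 * wbr_basis p m n t b1 (widx_down i b2) c else 0))"
      by (simp only: sum_wshift_1)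
    finally show ?thesis by simp
  qed
  finally show "wshift p m n t i 1 (wbr p m n t X Y) c = wbr p m n t (wshift p m n t i 1 X) Y c + wbr p m n t X (wshift p m n t i 1 Y) c" .
qed

lemma funpow_wbr_Dvec_derivation:
  assumes i: "i \<in> {1..m}" and ch: "CHAR('a::field) = p" and p: "0 < p"
  shows "(wbr p m n t (Dvec i) ^^ p ^ e) (wbr p m n t X Y)
    = (\<lambda>c. wbr p m n t ((wbr p m n t (Dvec i) ^^ p ^ e) X) Y c
          + wbr p m n t X ((wbr p m n t (Dvec i) ^^ p ^ e) (Y :: widx \<Rightarrow> 'a)) c)"
proof -
  have der: "wbr p m n t (Dvec i) (wbr p m n t X Y)
      = (\<lambda>c. wbr p m n t (wbr p m n t (Dvec i) X) Y c + wbr p m n t X (wbr p m n t (Dvec i) Y) c)"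
    for X Y :: "widx \<Rightarrow> 'a"
    unfolding wbr_Dvec_eq_wshift[OF i] by (rule wshift_1_derivation[OF i ch p])
  show ?thesis
    using funpow_derivation_CHAR_power[where S = "wbr p m n t (Dvec i)" and B = "wbr p m n t",
        OF wbr_add_right wbr_smul_right der, of e X Y] ch p
    by simp
qed

lemma Widx_raise_imp:
  assumes "(\<gamma>(i := \<gamma> i + N), w, s) \<in> Widx p m n t"
  shows "(\<gamma>, w, s) \<in> Widx p m n t"
  using Aidx_raise_le[of \<gamma> i N w p m n t 0] assms by (simp add: Widx_iff)

lemma wshift_Weven:
  assumes "X \<in> Weven p m n t"
  shows "wshift p m n t i N X \<in> Weven p m n t"
  using assms unfolding Weven_def
  by (auto simp: wshift_def split: if_splits dest: Widx_raise_imp)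

lemma wdeg_raise:
  assumes "i \<in> {1..m}"
  shows "wdeg m (\<gamma>(i := \<gamma> i + N), w, s) = wdeg m (\<gamma>, w, s) + int N"
proof -
  have "(\<Sum>j\<in>{1..m}. (\<gamma>(i := \<gamma> i + N)) j) = (\<Sum>j\<in>{1..m}. \<gamma> j) + N"
    using assms by (simp add: sum.remove sum.distrib)
  then have "int (\<Sum>j\<in>{1..m}. (\<gamma>(i := \<gamma> i + N)) j) = int (\<Sum>j\<in>{1..m}. \<gamma> j) + int N" by (simp only: of_nat_add)
  then show ?thesis by (simp only: wdeg_def prod.case)
qed

lemma wshift_Wcomp:
  assumes "X \<in> Wcomp p m n t j" "i \<in> {1..m}"
  shows "wshift p m n t i N X \<in> Wcomp p m n t (j - int N)"
proof -
  have "X \<in> Weven p m n t" using assms(1) by (simp add: Wcomp_def)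
  then have "wshift p m n t i N X \<in> Weven p m n t" by (rule wshift_Weven)
  moreover have "wdeg m b = j - int N" if "wshift p m n t i N X b \<noteq> 0" for b
  proof -
    obtain \<gamma> w s where b: "b = (\<gamma>, w, s)" by (cases b) auto
    have "X (\<gamma>(i := \<gamma> i + N), w, s) \<noteq> 0" using that by (auto simp: wshift_def b split: if_splits)
    then have "wdeg m (\<gamma>(i := \<gamma> i + N), w, s) = j" using assms(1) by (auto simp: Wcomp_def)
    then show ?thesis using wdeg_raise[OF assms(2)] b by simp
  qed
  ultimately show ?thesis by (simp add: Wcomp_def)
qed

lemma mono_D_mono_support:
  assumes A: "(\<alpha>, u) \<in> Aidx p m n t" and B: "(\<beta>, v) \<in> Aidx p m n t" and r: "r \<in> {1..m+n}"
    and nz: "mono_D_mono p m n t r (\<alpha>, u) (\<beta>, v) (\<gamma>, w) \<noteq> (0::'a::field)"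
  shows "(\<gamma>, w) \<in> Aidx p m n t \<and> card w + tau m r = card u + card v"
proof (cases "r \<in> {1..m}")
  case True
  note D = Dbasis_Y0[OF True]
  show ?thesis
  proof (cases "1 \<le> \<beta> r")
    case br: True
    have C: "(\<beta>(r := \<beta> r - 1), v) \<in> Aidx p m n t" using Aidx_lower[OF B] .
    have "amul_basis p m n t (\<alpha>, u) (\<beta>(r := \<beta> r - 1), v) (\<gamma>, w) \<noteq> (0::'a)"
      using nz unfolding mono_D_mono_def D if_P[OF br] amul_amono_amono[OF A C] .
    then have "(\<gamma>, w) \<in> Aidx p m n t" "u \<inter> v = {}" "w = u \<union> v"
      unfolding amul_basis_apply by (auto split: if_splits)
    moreover have "tau m r = 0" using True by (simp add: tau_def)
    ultimately show ?thesis using finite_odd_part[OF A] finite_odd_part[OF B] by (simp add: card_Un_disjoint)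
  next
    case False
    then show ?thesis using nz unfolding mono_D_mono_def D by (simp add: amul_zero_right)
  qed
next
  case False
  then have r1: "r \<in> {m+1..m+n}" using r by auto
  note D = Dbasis_Y1[OF r1]
  show ?thesis
  proof (cases "r \<in> v")
    case rv: True
    have C: "(\<beta>, v - {r}) \<in> Aidx p m n t" using Aidx_remove_odd[OF B] .
    have "amul_basis p m n t (\<alpha>, u) (\<beta>, v - {r}) (\<gamma>, w) \<noteq> (0::'a)"
      using nz rv unfolding mono_D_mono_def D by (simp add: amul_amono_smul[OF A C])
    then have "(\<gamma>, w) \<in> Aidx p m n t" "u \<inter> (v - {r}) = {}" "w = u \<union> (v - {r})"
      unfolding amul_basis_apply by (auto split: if_splits)
    moreover have "tau m r = 1" using r1 by (simp add: tau_def)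
    moreover have "card (v - {r}) + 1 = card v"
    proof -
      have "card v > 0" using rv finite_odd_part[OF B] by (auto simp: card_gt_0_iff)
      then show ?thesis using card_Diff_singleton[OF rv] by simp
    qed
    ultimately show ?thesis using finite_odd_part[OF A] finite_odd_part[OF B]
      by (simp add: card_Un_disjoint)
  next
    case False
    then show ?thesis using nz unfolding mono_D_mono_def D by (simp add: amul_zero_right)
  qed
qed

lemma even_sum_transfer: "(cw::nat) + tr = cu + cv \<Longrightarrow> even (cu + tr) \<Longrightarrow> even (cv + ts) \<Longrightarrow> even (cw + ts)"
  by presburger

lemma wbr_basis_support:
  assumes b1: "(\<alpha>, u, r) \<in> Widx p m n t" and b2: "(\<beta>, v, s) \<in> Widx p m n t"
    and nz: "wbr_basis p m n t (\<alpha>, u, r) (\<beta>, v, s) (\<gamma>, w, s') \<noteq> (0::'a::field)"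
  shows "(\<gamma>, w, s') \<in> Widx p m n t \<and>
    (even (card u + tau m r) \<longrightarrow> even (card v + tau m s) \<longrightarrow> even (card w + tau m s'))"
proof -
  have A: "(\<alpha>, u) \<in> Aidx p m n t" "r \<in> {1..m+n}" using b1 by (auto simp: Widx_iff)
  have B: "(\<beta>, v) \<in> Aidx p m n t" "s \<in> {1..m+n}" using b2 by (auto simp: Widx_iff)
  consider (first_term) "s' = s" "mono_D_mono p m n t r (\<alpha>, u) (\<beta>, v) (\<gamma>, w) \<noteq> (0::'a)"
    | (second_term) "s' = r" "mono_D_mono p m n t s (\<beta>, v) (\<alpha>, u) (\<gamma>, w) \<noteq> (0::'a)"
    using nz unfolding wbr_basis_eq_mono_D_mono by (cases "mono_D_mono p m n t r (\<alpha>, u) (\<beta>, v) (\<gamma>, w) = (0::'a)") (auto split: if_splits)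
  then show ?thesis
  proof cases
    case first_term
    from mono_D_mono_support[OF A(1) B(1) A(2) first_term(2)] have
      "(\<gamma>, w) \<in> Aidx p m n t" "card w + tau m r = card u + card v" by auto
    then show ?thesis using first_term B even_sum_transfer[of "card w" "tau m r" "card u" "card v" "tau m s"] by (simp add: Widx_iff)
  next
    case second_term
    from mono_D_mono_support[OF B(1) A(1) B(2) second_term(2)] have
      "(\<gamma>, w) \<in> Aidx p m n t" "card w + tau m s = card v + card u" by auto
    then show ?thesis using second_term A even_sum_transfer[of "card w" "tau m s" "card v" "card u" "tau m r"] by (simp add: Widx_iff add.commute)
  qed
qed

lemma wbr_Weven:
  assumes X: "X \<in> Weven p m n t" and Y: "Y \<in> Weven p m n t"
  shows "wbr p m n t X Y \<in> Weven p m n t"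
proof -
  have *: "c \<in> Widx p m n t \<and> even (card (fst (snd c)) + tau m (snd (snd c)))" if nz: "wbr p m n t X Y c \<noteq> (0::'a)" for c
  proof -
    obtain b1 where b1: "b1 \<in> Widx p m n t" "(\<Sum>b2\<in>Widx p m n t. X b1 * Y b2 * wbr_basis p m n t b1 b2 c) \<noteq> 0"
      using nz unfolding wbr_def by (meson sum.not_neutral_contains_not_neutral)
    obtain b2 where b2: "b2 \<in> Widx p m n t" "X b1 * Y b2 * wbr_basis p m n t b1 b2 c \<noteq> 0"
      using b1(2) by (meson sum.not_neutral_contains_not_neutral)
    obtain \<alpha> u r where e1: "b1 = (\<alpha>, u, r)" by (cases b1) auto
    obtain \<beta> v s where e2: "b2 = (\<beta>, v, s)" by (cases b2) auto
    obtain \<gamma> w s' where e3: "c = (\<gamma>, w, s')" by (cases c) auto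
    have "X (\<alpha>, u, r) \<noteq> 0" "Y (\<beta>, v, s) \<noteq> 0" "wbr_basis p m n t (\<alpha>, u, r) (\<beta>, v, s) (\<gamma>, w, s') \<noteq> (0::'a)"
      using b2(2) e1 e2 e3 by auto
    then have "even (card u + tau m r)" "even (card v + tau m s)" using X Y by (auto simp: Weven_def)
    moreover note wbr_basis_support[OF b1(1)[unfolded e1] b2(1)[unfolded e2] \<open>wbr_basis _ _ _ _ _ _ _ \<noteq> 0\<close>]
    ultimately show ?thesis using e3 by simp
  qed
  show ?thesis unfolding Weven_def
  proof (intro CollectI conjI allI impI)
    fix b assume "b \<notin> Widx p m n t" then show "wbr p m n t X Y b = 0" using * by blast
  next
    fix \<alpha> u r assume "wbr p m n t X Y (\<alpha>, u, r) \<noteq> 0"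
    then show "even (card u + tau m r)" using *[of "(\<alpha>, u, r)"] by simp
  qed
qed

definition even_widx :: "nat \<Rightarrow> nat \<Rightarrow> nat \<Rightarrow> (nat \<Rightarrow> nat) \<Rightarrow> widx \<Rightarrow> bool" where
  "even_widx p m n t b \<longleftrightarrow> b \<in> Widx p m n t \<and> even (card (fst (snd b)) + tau m (snd (snd b)))"

lemma wbasis_Weven: "even_widx p m n t b \<Longrightarrow> wbasis b \<in> Weven p m n t"
  by (cases b) (auto simp: even_widx_def Weven_def wbasis_def)

lemma wbasis_Wcomp: "even_widx p m n t b \<Longrightarrow> wbasis b \<in> Wcomp p m n t (wdeg m b)"
  using wbasis_Weven[of p m n t b] by (auto simp: Wcomp_def wbasis_def)

lemma wdeg_ge_minus_1: "wdeg m b \<ge> -1"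
  by (cases b) (simp add: wdeg_def del: of_nat_sum)

lemma Wcomp_below_minus_1: "X \<in> Wcomp p m n t j \<Longrightarrow> j < -1 \<Longrightarrow> X = (\<lambda>_. 0)"
proof (rule ext, rule ccontr)
  fix c assume "X \<in> Wcomp p m n t j" "j < -1" "X c \<noteq> 0"
  then have "wdeg m c = j" by (cases c) (auto simp: Wcomp_def)
  then show False using wdeg_ge_minus_1[of m c] \<open>j < -1\<close> by simp
qed

lemma zero_in_Weven: "(\<lambda>_. 0) \<in> Weven p m n t"
  by (simp add: Weven_def)

lemma Weven_support: "X \<in> Weven p m n t \<Longrightarrow> X c \<noteq> 0 \<Longrightarrow> c \<in> Widx p m n t"
  by (cases c) (auto simp: Weven_def)

lemma Weven_add:
  assumes X: "X \<in> Weven p m n t" and Y: "Y \<in> Weven p m n t"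
  shows "(\<lambda>c. X c + Y c) \<in> Weven p m n t"
  unfolding Weven_def
proof (intro CollectI conjI allI impI)
  fix b assume "b \<notin> Widx p m n t" then show "X b + Y b = 0" using X Y by (cases b) (auto simp: Weven_def)
next
  fix \<alpha> u r assume nz: "X (\<alpha>, u, r) + Y (\<alpha>, u, r) \<noteq> 0"
  then have "X (\<alpha>, u, r) \<noteq> 0 \<or> Y (\<alpha>, u, r) \<noteq> 0" by auto
  then show "even (card u + tau m r)" using X Y unfolding Weven_def by blast
qed

lemma Weven_smul: "X \<in> Weven p m n t \<Longrightarrow> (\<lambda>c. a * X c) \<in> Weven p m n t"
  unfolding Weven_def by auto

lemma Weven_expand:
  assumes "X \<in> Weven p m n t"
  shows "(\<lambda>c. \<Sum>b\<in>Widx p m n t. X b * wbasis b c) = X"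
proof
  fix c
  have "(\<Sum>b\<in>Widx p m n t. X b * wbasis b c) = (\<Sum>b\<in>Widx p m n t. if b = c then X b else 0)"
    by (intro sum.cong) (auto simp: wbasis_def)
  also have "\<dots> = X c" using assms finite_Widx by (cases c) (auto simp: sum.delta Weven_def)
  finally show "(\<Sum>b\<in>Widx p m n t. X b * wbasis b c) = X c" .
qed

lemma Weven_parity: "X \<in> Weven p m n t \<Longrightarrow> X (\<alpha>, u, r) \<noteq> 0 \<Longrightarrow> even (card u + tau m r)"
  by (simp add: Weven_def)

lemma Wcomp_deg: "X \<in> Wcomp p m n t k \<Longrightarrow> X b \<noteq> 0 \<Longrightarrow> wdeg m b = k"
  by (cases b) (simp add: Wcomp_def)

lemma Weven_lincomb:
  assumes "\<And>i. i \<in> I \<Longrightarrow> F i \<in> Weven p m n t"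
  shows "(\<lambda>b. \<Sum>i\<in>I. c i * F i b) \<in> Weven p m n t"
  unfolding Weven_def
proof (intro CollectI conjI allI impI)
  fix b assume b: "b \<notin> Widx p m n t"
  have "F i b = 0" if "i \<in> I" for i using Weven_support[OF assms[OF that]] b by blast
  then show "(\<Sum>i\<in>I. c i * F i b) = 0" by simp
next
  fix \<alpha> u r assume "(\<Sum>i\<in>I. c i * F i (\<alpha>, u, r)) \<noteq> 0"
  then obtain i where i: "i \<in> I" "c i * F i (\<alpha>, u, r) \<noteq> 0" using sum.not_neutral_contains_not_neutral by blast
  then have "F i (\<alpha>, u, r) \<noteq> 0" by simp
  then show "even (card u + tau m r)" using Weven_parity[OF assms[OF i(1)]] by blast
qed

lemma Wcomp_lincomb:
  assumes "\<And>i. i \<in> I \<Longrightarrow> F i \<in> Wcomp p m n t k"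
  shows "(\<lambda>b. \<Sum>i\<in>I. c i * F i b) \<in> Wcomp p m n t k"
proof -
  have "(\<lambda>b. \<Sum>i\<in>I. c i * F i b) \<in> Weven p m n t"
    by (rule Weven_lincomb) (use assms in \<open>simp add: Wcomp_def\<close>)
  moreover have "wdeg m b = k" if nz: "(\<Sum>i\<in>I. c i * F i b) \<noteq> 0" for b
  proof -
    obtain i where i: "i \<in> I" "c i * F i b \<noteq> 0" using sum.not_neutral_contains_not_neutral[OF nz] by blast
    then have "F i b \<noteq> 0" by simp
    then show ?thesis using Wcomp_deg[OF assms[OF i(1)]] by blast
  qed
  ultimately show ?thesis unfolding Wcomp_def by blast
qed

lemma Weven_diff: "X \<in> Weven p m n t \<Longrightarrow> Y \<in> Weven p m n t \<Longrightarrow> (\<lambda>c. X c - Y c) \<in> Weven p m n t"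
  using Weven_add[of X p m n t "\<lambda>c. (-1) * Y c"] Weven_smul[of Y p m n t "-1"] by simp

lemma Wcomp_diff:
  assumes "X \<in> Wcomp p m n t k" "Y \<in> Wcomp p m n t k"
  shows "(\<lambda>c. X c - Y c) \<in> Wcomp p m n t k"
proof -
  have "(\<lambda>c. X c - Y c) \<in> Weven p m n t" using assms Weven_diff by (auto simp: Wcomp_def)
  moreover have "wdeg m b = k" if "X b - Y b \<noteq> 0" for b
    using that Wcomp_deg[OF assms(1)] Wcomp_deg[OF assms(2)] by (cases "X b = 0") auto
  ultimately show ?thesis by (simp add: Wcomp_def)
qed

section \<open>Brackets with toral and divided-power elements\<close>

lemma prod_choose_single_left:
  assumes "l \<in> {1..(m::nat)}"
  shows "(\<Prod>j\<in>{1..m}. of_nat (((\<lambda>_. 0)(l := b)) j + x j choose ((\<lambda>_. 0)(l := b)) j))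
    = (of_nat (b + x l choose b) :: 'a::field)"
  using assms by (subst prod.remove[of _ l]) (simp_all add: prod.neutral)

lemma prod_choose_single_right:
  assumes "l \<in> {1..(m::nat)}"
  shows "(\<Prod>j\<in>{1..m}. of_nat (x j + ((\<lambda>_. 0)(l := b)) j choose x j)) = (of_nat (x l + b choose x l) :: 'a::field)"
  using assms by (subst prod.remove[of _ l]) (simp_all add: prod.neutral)

lemma osign_singleton:
  assumes "k \<notin> v" "finite v"
  shows "osign {k} v = ((-1) ^ card {l \<in> v. l < k} :: 'a::field)"
proof -
  have "{(k', l). k' \<in> {k} \<and> l \<in> v \<and> l < k'} = (\<lambda>l. (k, l)) ` {l \<in> v. l < k}" by auto
  moreover have "card ((\<lambda>l. (k, l)) ` {l \<in> v. l < k}) = card {l \<in> v. l < k}"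
    by (rule card_image) (auto simp: inj_on_def)
  ultimately show ?thesis by (simp add: osign_def)
qed

lemma wbr_basis_pure_Y0:
  assumes B: "(\<beta>, {}) \<in> Aidx p m n t" and c0: "c0 \<in> {1..m}" and E: "(\<alpha>', u, s) \<in> Widx p m n t"
  shows "wbr_basis p m n t (\<beta>, {}, c0) (\<alpha>', u, s) (\<gamma>, w, s'') =
     (if s'' = s \<and> 1 \<le> \<alpha>' c0 then amul_basis p m n t (\<beta>, {}) (\<alpha>'(c0 := \<alpha>' c0 - 1), u) (\<gamma>, w) else 0)
     - (if s'' = c0 \<and> s \<in> {1..m} \<and> 1 \<le> \<beta> s
       then amul_basis p m n t (\<alpha>', u) (\<beta>(s := \<beta> s - 1), {}) (\<gamma>, w) else (0::'a::field))"
proof -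
  have A: "(\<alpha>', u) \<in> Aidx p m n t" "s \<in> {1..m+n}" using E by (auto simp: Widx_iff)
  have tau_c0: "tau m c0 = 0" using c0 by (simp add: tau_def)
  have first: "mono_D_mono p m n t c0 (\<beta>, {}) (\<alpha>', u) (\<gamma>, w) = (if 1 \<le> \<alpha>' c0 then amul_basis p m n t (\<beta>, {}) (\<alpha>'(c0 := \<alpha>' c0 - 1), u) (\<gamma>, w) else (0::'a))"
  proof (cases "1 \<le> \<alpha>' c0")
    case True
    show ?thesis unfolding mono_D_mono_def Dbasis_Y0[OF c0] if_P[OF True] amul_amono_amono[OF B Aidx_lower[OF A(1)]] ..
  next
    case False
    show ?thesis unfolding mono_D_mono_def Dbasis_Y0[OF c0] if_not_P[OF False] amul_zero_right by simp
  qed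
  have second: "mono_D_mono p m n t s (\<alpha>', u) (\<beta>, {}) (\<gamma>, w) = (if s \<in> {1..m} \<and> 1 \<le> \<beta> s then amul_basis p m n t (\<alpha>', u) (\<beta>(s := \<beta> s - 1), {}) (\<gamma>, w) else (0::'a))"
  proof (cases "s \<in> {1..m}")
    case sY0: True
    show ?thesis
    proof (cases "1 \<le> \<beta> s")
      case True
      show ?thesis unfolding mono_D_mono_def Dbasis_Y0[OF sY0] if_P[OF True] amul_amono_amono[OF A(1) Aidx_lower[OF B]] using sY0 True by simp
    next
      case False
      show ?thesis unfolding mono_D_mono_def Dbasis_Y0[OF sY0] if_not_P[OF False] amul_zero_right using False by simp
    qed
  next
    case False
    then have "s \<in> {m+1..m+n}" using A(2) by auto
    then show ?thesis unfolding mono_D_mono_def Dbasis_Y1[OF \<open>s \<in> {m+1..m+n}\<close>] using False by (simp add: amul_zero_right)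
  qed
  show ?thesis unfolding wbr_basis_eq_mono_D_mono first second tau_c0 by simp
qed

lemma wbr_toral_Y0:
  assumes a: "a \<in> {1..m}" and E: "(\<alpha>, u, s) \<in> Widx p m n t" and H: "((\<lambda>_. 0)(a := 1), {}) \<in> Aidx p m n t"
  shows "wbr p m n t (wbasis ((\<lambda>_. 0)(a := 1), {}, a)) (wbasis (\<alpha>, u, s))
    = (\<lambda>c. (of_nat (\<alpha> a) - (if s = a then 1 else 0)) * (wbasis (\<alpha>, u, s) c :: 'a::field))"
proof
  fix c :: widx
  obtain \<gamma> w s'' where c: "c = (\<gamma>, w, s'')" by (cases c) auto
  have H_Widx: "((\<lambda>_. 0)(a := 1), {}, a) \<in> Widx p m n t" using H a by (simp add: Widx_iff)
  have A: "(\<alpha>, u) \<in> Aidx p m n t" using E by (simp add: Widx_iff)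
  have first: "(if s'' = s \<and> 1 \<le> \<alpha> a then amul_basis p m n t ((\<lambda>_. 0)(a := 1), {}) (\<alpha>(a := \<alpha> a - 1), u) (\<gamma>, w) else 0)
     = (if s'' = s \<and> \<gamma> = \<alpha> \<and> w = u then of_nat (\<alpha> a) else (0::'a))"
  proof (cases "1 \<le> \<alpha> a")
    case True
    have exps: "(\<lambda>j. ((\<lambda>_. 0)(a := 1)) j + (\<alpha>(a := \<alpha> a - 1)) j) = \<alpha>" using True by (auto simp: fun_eq_iff)
    have binom: "(\<Prod>j\<in>{1..m}. of_nat (((\<lambda>_. 0)(a := 1)) j + (\<alpha>(a := \<alpha> a - 1)) j choose ((\<lambda>_. 0)(a := 1)) j)) = (of_nat (\<alpha> a) :: 'a)"
      unfolding prod_choose_single_left[OF a] using True by simp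
    show ?thesis unfolding amul_basis_apply exps binom using True A by auto
  next
    case False then have "\<alpha> a = 0" by simp
    then show ?thesis by auto
  qed
  have second: "(if s'' = a \<and> s \<in> {1..m} \<and> 1 \<le> ((\<lambda>_. 0::nat)(a := 1)) s then amul_basis p m n t (\<alpha>, u) (((\<lambda>_. 0)(a := 1))(s := ((\<lambda>_. 0)(a := 1)) s - 1), {}) (\<gamma>, w) else 0)
     = (if s'' = a \<and> s = a \<and> \<gamma> = \<alpha> \<and> w = u then 1 else (0::'a))"
  proof (cases "s = a")
    case True
    have lowered: "((\<lambda>_. 0)(a := 1))(s := ((\<lambda>_. 0)(a := 1)) s - 1) = (\<lambda>_. 0::nat)" using True by (auto simp: fun_eq_iff)
    have cond: "(s'' = a \<and> s \<in> {1..m} \<and> 1 \<le> ((\<lambda>_. 0::nat)(a := 1)) s) \<longleftrightarrow> s'' = a" using True a by simp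
    show ?thesis unfolding lowered amul_basis_one_right[OF A] cond using True a by (auto simp: amono_def)
  next
    case False then show ?thesis by auto
  qed
  show "wbr p m n t (wbasis ((\<lambda>_. 0)(a := 1), {}, a)) (wbasis (\<alpha>, u, s)) c = (of_nat (\<alpha> a) - (if s = a then 1 else 0)) * (wbasis (\<alpha>, u, s) c :: 'a)"
    unfolding wbr_wbasis[OF H_Widx E] c wbr_basis_pure_Y0[OF H a E] first second by (auto simp: wbasis_def)
qed

lemma mono_D_mono_odd_toral:
  assumes k: "k \<in> {m+1..m+n}" and A: "(\<alpha>, u) \<in> Aidx p m n t"
  shows "mono_D_mono p m n t k (\<lambda>_. 0, {k}) (\<alpha>, u) (\<gamma>, w)
    = (if k \<in> u \<and> \<gamma> = \<alpha> \<and> w = u then 1 else (0::'a::field))"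
proof (cases "k \<in> u")
  case True
  have HA: "(\<lambda>_. 0, {k}) \<in> Aidx p m n t" using k by (simp add: Aidx_iff)
  have C: "(\<alpha>, u - {k}) \<in> Aidx p m n t" using Aidx_remove_odd[OF A] .
  have un: "{k} \<union> (u - {k}) = u" and dj: "{k} \<inter> (u - {k}) = {}" using True by auto
  have os: "osign {k} (u - {k}) = ((-1) ^ card {l \<in> u. l < k} :: 'a)"
  proof -
    have "{l \<in> u - {k}. l < k} = {l \<in> u. l < k}" by auto
    then show ?thesis using osign_singleton[of k "u - {k}"] finite_odd_part[OF A] by simp
  qed
  have mono: "mono_D_mono p m n t k (\<lambda>_. 0, {k}) (\<alpha>, u)
      = (\<lambda>c. (-1) ^ card {l \<in> u. l < k} * (amul_basis p m n t (\<lambda>_. 0, {k}) (\<alpha>, u - {k}) c :: 'a))"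
    unfolding mono_D_mono_def Dbasis_Y1[OF k] if_P[OF True] using amul_amono_smul[OF HA C] .
  have "((-1::'a) ^ N) * (-1) ^ N = 1" for N by (simp flip: power_mult_distrib)
  then show ?thesis unfolding mono amul_basis_apply un os using True A dj by auto
next
  case False
  then show ?thesis unfolding mono_D_mono_def Dbasis_Y1[OF k] by (simp add: amul_zero_right)
qed

lemma mono_D_mono_odd_generator:
  assumes k: "k \<in> {m+1..m+n}" and A: "(\<alpha>, u) \<in> Aidx p m n t" and s: "s \<in> {1..m+n}"
  shows "mono_D_mono p m n t s (\<alpha>, u) (\<lambda>_. 0, {k}) (\<gamma>, w)
    = (if s = k \<and> \<gamma> = \<alpha> \<and> w = u then 1 else (0::'a::field))"
proof (cases "s \<in> {1..m}")
  case True
  then have "s \<noteq> k" using k by auto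
  then show ?thesis unfolding mono_D_mono_def Dbasis_Y0[OF True] by (simp add: amul_zero_right)
next
  case False
  then have s1: "s \<in> {m+1..m+n}" using s by auto
  show ?thesis
  proof (cases "s = k")
    case True
    have empty: "{l. l = k \<and> l < k} = {}" by auto
    have "mono_D_mono p m n t s (\<alpha>, u) (\<lambda>_. 0, {k}) = (\<lambda>c. 1 * (amul_basis p m n t (\<alpha>, u) (\<lambda>_. 0, {}) c :: 'a))"
      unfolding mono_D_mono_def Dbasis_Y1[OF s1] using True amul_amono_smul[OF A one_in_Aidx, of 1]
      by (simp add: empty)
    then show ?thesis using True A by (simp add: amul_basis_one_right amono_def)
  next
    case False
    then show ?thesis unfolding mono_D_mono_def Dbasis_Y1[OF s1] by (simp add: amul_zero_right)
  qed
qed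

lemma wbr_toral_Y1:
  assumes k: "k \<in> {m+1..m+n}" and E: "(\<alpha>, u, s) \<in> Widx p m n t"
  shows "wbr p m n t (wbasis (\<lambda>_. 0, {k}, k)) (wbasis (\<alpha>, u, s))
    = (\<lambda>c. ((if k \<in> u then 1 else 0) - (if s = k then 1 else 0)) * (wbasis (\<alpha>, u, s) c :: 'a::field))"
proof
  fix c :: widx
  obtain \<gamma> w s'' where c: "c = (\<gamma>, w, s'')" by (cases c) auto
  have HW: "(\<lambda>_. 0, {k}, k) \<in> Widx p m n t" using k by (simp add: Widx_iff Aidx_iff)
  have A: "(\<alpha>, u) \<in> Aidx p m n t" and s: "s \<in> {1..m+n}" using E by (auto simp: Widx_iff)
  have "tau m k = 1" using k by (simp add: tau_def)
  then have sg: "((-1::'a) ^ ((card {k} + tau m k) * (card u + tau m s))) = 1"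
    by (simp add: power_mult)
  show "wbr p m n t (wbasis (\<lambda>_. 0, {k}, k)) (wbasis (\<alpha>, u, s)) c
      = ((if k \<in> u then 1 else 0) - (if s = k then 1 else 0)) * (wbasis (\<alpha>, u, s) c :: 'a)"
    unfolding wbr_wbasis[OF HW E] c wbr_basis_eq_mono_D_mono mono_D_mono_odd_toral[OF k A]
      mono_D_mono_odd_generator[OF k A s] sg
    by (auto simp: wbasis_def)
qed

lemma wbr_divided_power_Dvec:
  assumes i: "i \<in> {1..m}" and E: "(\<alpha>, u, s) \<in> Widx p m n t" and Q1: "1 \<le> Q" and Qa: "Q \<le> \<alpha> i"
  shows "wbr p m n t (wbasis ((\<lambda>_. 0)(i := Q), {}, i)) (wbasis (\<alpha>(i := \<alpha> i - (Q - 1)), u, s))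
    = (\<lambda>c. (of_nat (\<alpha> i choose Q) - (if s = i then of_nat (\<alpha> i choose (\<alpha> i - (Q - 1))) else 0))
      * (wbasis (\<alpha>, u, s) c :: 'a::field))"
proof
  fix c :: widx
  obtain \<gamma> w s'' where c: "c = (\<gamma>, w, s'')" by (cases c) auto
  have A: "(\<alpha>, u) \<in> Aidx p m n t" and s: "s \<in> {1..m+n}" using E by (auto simp: Widx_iff)
  have aQ: "\<alpha> i \<le> p ^ t i - 1" using A i by (auto simp: Aidx_iff)
  have G_Aidx: "((\<lambda>_. 0)(i := Q), {}) \<in> Aidx p m n t" using i Qa aQ by (auto simp: Aidx_iff)
  have G_Widx: "((\<lambda>_. 0)(i := Q), {}, i) \<in> Widx p m n t" using G_Aidx i by (simp add: Widx_iff)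
  have E'_Aidx: "(\<alpha>(i := \<alpha> i - (Q - 1)), u) \<in> Aidx p m n t" using Aidx_lower[OF A] .
  have E'_Widx: "(\<alpha>(i := \<alpha> i - (Q - 1)), u, s) \<in> Widx p m n t" using E'_Aidx s by (simp add: Widx_iff)
  have first: "(if s'' = s \<and> 1 \<le> (\<alpha>(i := \<alpha> i - (Q - 1))) i then amul_basis p m n t ((\<lambda>_. 0)(i := Q), {}) ((\<alpha>(i := \<alpha> i - (Q - 1)))(i := (\<alpha>(i := \<alpha> i - (Q - 1))) i - 1), u) (\<gamma>, w) else 0)
      = (if s'' = s \<and> \<gamma> = \<alpha> \<and> w = u then of_nat (\<alpha> i choose Q) else (0::'a))"
  proof -
    have lowered: "(\<alpha>(i := \<alpha> i - (Q - 1)))(i := (\<alpha>(i := \<alpha> i - (Q - 1))) i - 1) = \<alpha>(i := \<alpha> i - Q)" using Q1 Qa by simp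
    have exps: "(\<lambda>j. ((\<lambda>_. 0::nat)(i := Q)) j + (\<alpha>(i := \<alpha> i - Q)) j) = \<alpha>" using Qa by (auto simp: fun_eq_iff)
    have binom: "(\<Prod>j\<in>{1..m}. of_nat (((\<lambda>_. 0)(i := Q)) j + (\<alpha>(i := \<alpha> i - Q)) j choose ((\<lambda>_. 0)(i := Q)) j)) = (of_nat (\<alpha> i choose Q) :: 'a)"
      unfolding prod_choose_single_left[OF i] using Qa by simp
    have c1: "1 \<le> (\<alpha>(i := \<alpha> i - (Q - 1))) i" using Q1 Qa by simp
    show ?thesis unfolding lowered amul_basis_apply exps binom using c1 A by auto
  qed
  have second: "(if s'' = i \<and> s \<in> {1..m} \<and> 1 \<le> ((\<lambda>_. 0::nat)(i := Q)) s then amul_basis p m n t (\<alpha>(i := \<alpha> i - (Q - 1)), u) (((\<lambda>_. 0)(i := Q))(s := ((\<lambda>_. 0)(i := Q)) s - 1), {}) (\<gamma>, w) else 0)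
      = (if s'' = i \<and> s = i \<and> \<gamma> = \<alpha> \<and> w = u then of_nat (\<alpha> i choose (\<alpha> i - (Q - 1))) else (0::'a))"
  proof (cases "s = i")
    case True
    have cond: "(s'' = i \<and> s \<in> {1..m} \<and> 1 \<le> ((\<lambda>_. 0::nat)(i := Q)) s) \<longleftrightarrow> s'' = i" using True i Q1 by simp
    have lowered: "((\<lambda>_. 0::nat)(i := Q))(s := ((\<lambda>_. 0::nat)(i := Q)) s - 1) = (\<lambda>_. 0)(i := Q - 1)" using True by simp
    have exps: "(\<lambda>j. (\<alpha>(i := \<alpha> i - (Q - 1))) j + ((\<lambda>_. 0::nat)(i := Q - 1)) j) = \<alpha>" using Qa Q1 by (auto simp: fun_eq_iff)
    have binom: "(\<Prod>j\<in>{1..m}. of_nat ((\<alpha>(i := \<alpha> i - (Q - 1))) j + ((\<lambda>_. 0)(i := Q - 1)) j choose (\<alpha>(i := \<alpha> i - (Q - 1))) j)) = (of_nat (\<alpha> i choose (\<alpha> i - (Q - 1))) :: 'a)"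
      unfolding prod_choose_single_right[OF i] using Qa Q1 by simp
    show ?thesis unfolding cond lowered amul_basis_apply exps binom using True A by auto
  next
    case False
    then show ?thesis by auto
  qed
  show "wbr p m n t (wbasis ((\<lambda>_. 0)(i := Q), {}, i)) (wbasis (\<alpha>(i := \<alpha> i - (Q - 1)), u, s)) c
    = (of_nat (\<alpha> i choose Q) - (if s = i then of_nat (\<alpha> i choose (\<alpha> i - (Q - 1))) else 0)) * (wbasis (\<alpha>, u, s) c :: 'a)"
    unfolding wbr_wbasis[OF G_Widx E'_Widx] c wbr_basis_pure_Y0[OF G_Aidx i E'_Widx] first second by (auto simp: wbasis_def)
qed

lemma wbr_transfer_exponent:
  assumes l: "l \<in> {1..m}" and l': "l' \<in> {1..m}" and ll: "l \<noteq> l'" and ls: "l \<noteq> s"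
    and E: "(\<alpha>, u, s) \<in> Widx p m n t" and E'A: "(\<alpha>(l := 0, l' := \<alpha> l' + 1), u) \<in> Aidx p m n t"
  shows "wbr p m n t (wbasis ((\<lambda>_. 0)(l := \<alpha> l), {}, l')) (wbasis (\<alpha>(l := 0, l' := \<alpha> l' + 1), u, s))
    = (wbasis (\<alpha>, u, s) :: widx \<Rightarrow> 'a::field)"
proof
  fix c :: widx
  obtain \<gamma> w s'' where c: "c = (\<gamma>, w, s'')" by (cases c) auto
  have A: "(\<alpha>, u) \<in> Aidx p m n t" and s: "s \<in> {1..m+n}" using E by (auto simp: Widx_iff)
  have G_Aidx: "((\<lambda>_. 0)(l := \<alpha> l), {}) \<in> Aidx p m n t" using A l by (auto simp: Aidx_iff)
  have G_Widx: "((\<lambda>_. 0)(l := \<alpha> l), {}, l') \<in> Widx p m n t" using G_Aidx l' by (simp add: Widx_iff)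
  have E'_Widx: "(\<alpha>(l := 0, l' := \<alpha> l' + 1), u, s) \<in> Widx p m n t" using E'A s by (simp add: Widx_iff)
  have first: "(if s'' = s \<and> 1 \<le> (\<alpha>(l := 0, l' := \<alpha> l' + 1)) l' then amul_basis p m n t ((\<lambda>_. 0)(l := \<alpha> l), {}) ((\<alpha>(l := 0, l' := \<alpha> l' + 1))(l' := (\<alpha>(l := 0, l' := \<alpha> l' + 1)) l' - 1), u) (\<gamma>, w) else 0)
      = (if s'' = s \<and> \<gamma> = \<alpha> \<and> w = u then 1 else (0::'a))"
  proof -
    have lowered: "(\<alpha>(l := 0, l' := \<alpha> l' + 1))(l' := (\<alpha>(l := 0, l' := \<alpha> l' + 1)) l' - 1) = \<alpha>(l := 0)" using ll by (auto simp: fun_eq_iff)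
    have exps: "(\<lambda>j. ((\<lambda>_. 0::nat)(l := \<alpha> l)) j + (\<alpha>(l := 0)) j) = \<alpha>" by (auto simp: fun_eq_iff)
    have binom: "(\<Prod>j\<in>{1..m}. of_nat (((\<lambda>_. 0)(l := \<alpha> l)) j + (\<alpha>(l := 0)) j choose ((\<lambda>_. 0)(l := \<alpha> l)) j)) = (1 :: 'a)"
      unfolding prod_choose_single_left[OF l] by simp
    have c1: "1 \<le> (\<alpha>(l := 0, l' := \<alpha> l' + 1)) l'" by simp
    show ?thesis unfolding lowered amul_basis_apply exps binom using c1 A by auto
  qed
  have second: "(if s'' = l' \<and> s \<in> {1..m} \<and> 1 \<le> ((\<lambda>_. 0::nat)(l := \<alpha> l)) s then amul_basis p m n t (\<alpha>(l := 0, l' := \<alpha> l' + 1), u) (((\<lambda>_. 0)(l := \<alpha> l))(s := ((\<lambda>_. 0)(l := \<alpha> l)) s - 1), {}) (\<gamma>, w) else (0::'a)) = 0"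
    using ls by simp
  show "wbr p m n t (wbasis ((\<lambda>_. 0)(l := \<alpha> l), {}, l')) (wbasis (\<alpha>(l := 0, l' := \<alpha> l' + 1), u, s)) c = (wbasis (\<alpha>, u, s) c :: 'a)"
    unfolding wbr_wbasis[OF G_Widx E'_Widx] c wbr_basis_pure_Y0[OF G_Aidx l' E'_Widx] first second by (auto simp: wbasis_def)
qed

lemma wshift_1_wbasis:
  assumes "E \<in> Widx p m n t"
  shows "wshift p m n t l 1 (wbasis E)
    = (if 1 \<le> fst E l then wbasis (widx_down l E) else (\<lambda>_. (0::'a::field)))"
proof -
  obtain \<alpha> u s where E: "E = (\<alpha>, u, s)" by (cases E) auto
  show ?thesis
  proof (rule ext)
    fix c :: widx
    obtain \<gamma> w s' where c: "c = (\<gamma>, w, s')" by (cases c) auto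
    have "(\<gamma>(l := \<gamma> l + 1) = \<alpha>) \<longleftrightarrow> (1 \<le> \<alpha> l \<and> \<gamma> = \<alpha>(l := \<alpha> l - 1))"
      by (auto simp: fun_eq_iff)
    moreover have "(\<alpha>(l := \<alpha> l - 1), u, s) \<in> Widx p m n t" if "1 \<le> \<alpha> l"
      using assms E Aidx_lower by (auto simp: Widx_iff)
    ultimately show "wshift p m n t l 1 (wbasis E) c = (if 1 \<le> fst E l then wbasis (widx_down l E) else (\<lambda>_. (0::'a))) c"
      using assms unfolding E c by (auto simp: wshift_def wbasis_def widx_down_def)
  qed
qed

lemma even_widx_lower:
  assumes "even_widx p m n t E" "1 \<le> fst E l" and that: "l \<in> {1..m}"
  shows "even_widx p m n t (widx_down l E) \<and> wdeg m (widx_down l E) < wdeg m E"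
proof -
  obtain \<alpha> u s where E: "E = (\<alpha>, u, s)" by (cases E) auto
  have "(\<alpha>(l := \<alpha> l - 1), u) \<in> Aidx p m n t" using assms E Aidx_lower by (auto simp: even_widx_def Widx_iff)
  moreover have "wdeg m (\<alpha>(l := \<alpha> l - 1), u, s) < wdeg m (\<alpha>, u, s)"
  proof -
    have e: "(\<alpha>(l := \<alpha> l - 1))(l := (\<alpha>(l := \<alpha> l - 1)) l + 1) = \<alpha>" using assms E by (auto simp: fun_eq_iff)
    show ?thesis using wdeg_raise[OF that, of "\<alpha>(l := \<alpha> l - 1)" 1 u s] unfolding e by simp
  qed
  ultimately show ?thesis using assms E by (auto simp: even_widx_def Widx_iff widx_down_def)
qed

lemma funpow_wbr_Dvec_divided_power_Dvec:
  assumes l: "l \<in> {1..m}" and i: "i \<in> {1..m}" and q: "0 < q" "q \<le> p ^ t i - 1"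
  shows "(wbr p m n t (Dvec l) ^^ q) (wbasis ((\<lambda>_. 0)(i := q), {}, i)) (\<lambda>_. 0, {}, i)
    = (if l = i then 1 else (0::'a::field))"
proof -
  have "((\<lambda>_. 0)(i := q), {}, i) \<in> Widx p m n t" using i q by (auto simp: Widx_iff Aidx_iff)
  moreover have "(\<lambda>_. 0::nat)(l := q) = (\<lambda>_. 0)(i := q) \<longleftrightarrow> l = i"
    using q(1) by (auto simp: fun_eq_iff)
  ultimately show ?thesis by (simp add: funpow_wbr_Dvec[OF l q(1)] wshift_def wbasis_def)
qed

section \<open>Derivations of degree -q\<close>

lemma funpow_wbr_Dvec_in_Der_neg:
  assumes i: "i \<in> {1..m}" and ch: "CHAR('a::field) = p" and p: "0 < p"
  shows "(wbr p m n t (Dvec i) ^^ p ^ e :: (widx \<Rightarrow> 'a) \<Rightarrow> _) \<in> Der_neg p m n t (p ^ e)"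
proof -
  have "0 < p ^ e" using p by simp
  note T = funpow_wbr_Dvec[OF i this]
  have "wshift p m n t i (p ^ e) (wbr p m n t X Y)
      = (\<lambda>c. wbr p m n t (wshift p m n t i (p ^ e) X) Y c + wbr p m n t X (wshift p m n t i (p ^ e) Y) c)"
    for X Y :: "widx \<Rightarrow> 'a"
    using funpow_wbr_Dvec_derivation[OF i ch p, where n = n and t = t and e = e and X = X and Y = Y] unfolding T .
  moreover have "wshift p m n t i (p ^ e) X \<in> Wcomp p m n t (j - int (p ^ e))"
    if "X \<in> Wcomp p m n t j" for j and X :: "widx \<Rightarrow> 'a"
    using wshift_Wcomp[OF that i] .
  ultimately show ?thesis
    unfolding Der_neg_def T by (simp add: wshift_Weven wshift_add wshift_smul)
qed

lemma Der_neg_lincomb: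
  fixes F :: "'i \<Rightarrow> (widx \<Rightarrow> 'a::field) \<Rightarrow> widx \<Rightarrow> 'a"
  assumes "\<And>i. i \<in> I \<Longrightarrow> F i \<in> Der_neg p m n t q"
  shows "(\<lambda>X b. \<Sum>i\<in>I. c i * F i X b) \<in> Der_neg p m n t q"
  unfolding Der_neg_def
proof (intro CollectI conjI ballI allI)
  fix X :: "widx \<Rightarrow> 'a" assume "X \<in> Weven p m n t"
  then show "(\<lambda>b. \<Sum>i\<in>I. c i * F i X b) \<in> Weven p m n t"
    using assms by (intro Weven_lincomb) (simp add: Der_neg_def)
next
  fix X Y :: "widx \<Rightarrow> 'a" assume "X \<in> Weven p m n t" "Y \<in> Weven p m n t"
  then have "F i (\<lambda>c. X c + Y c) = (\<lambda>c. F i X c + F i Y c)" if "i \<in> I" for i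
    using assms[OF that] by (simp add: Der_neg_def)
  then show "(\<lambda>b. \<Sum>i\<in>I. c i * F i (\<lambda>c. X c + Y c) b)
      = (\<lambda>b. (\<Sum>i\<in>I. c i * F i X b) + (\<Sum>i\<in>I. c i * F i Y b))"
    by (simp add: sum.distrib distrib_left cong: sum.cong)
next
  fix a and X :: "widx \<Rightarrow> 'a" assume "X \<in> Weven p m n t"
  then have "F i (\<lambda>c. a * X c) = (\<lambda>c. a * F i X c)" if "i \<in> I" for i
    using assms[OF that] by (simp add: Der_neg_def)
  then show "(\<lambda>b. \<Sum>i\<in>I. c i * F i (\<lambda>c. a * X c) b) = (\<lambda>b. a * (\<Sum>i\<in>I. c i * F i X b))"
    by (simp add: sum_distrib_left algebra_simps cong: sum.cong)
next
  fix X Y :: "widx \<Rightarrow> 'a" assume "X \<in> Weven p m n t" "Y \<in> Weven p m n t"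
  then have "F i (wbr p m n t X Y) = (\<lambda>c. wbr p m n t (F i X) Y c + wbr p m n t X (F i Y) c)"
    if "i \<in> I" for i
    using assms[OF that] by (simp add: Der_neg_def)
  then show "(\<lambda>b. \<Sum>i\<in>I. c i * F i (wbr p m n t X Y) b)
      = (\<lambda>b. wbr p m n t (\<lambda>b. \<Sum>i\<in>I. c i * F i X b) Y b + wbr p m n t X (\<lambda>b. \<Sum>i\<in>I. c i * F i Y b) b)"
    by (simp add: wbr_lin_left wbr_lin_right sum.distrib distrib_left cong: sum.cong)
next
  fix j and X :: "widx \<Rightarrow> 'a" assume "X \<in> Wcomp p m n t j"
  then show "(\<lambda>b. \<Sum>i\<in>I. c i * F i X b) \<in> Wcomp p m n t (j - int q)"
    using assms by (intro Wcomp_lincomb) (simp add: Der_neg_def)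
qed

lemma Der_neg_diff:
  assumes D1: "D1 \<in> Der_neg p m n t q" and D2: "D2 \<in> Der_neg p m n t q"
  shows "(\<lambda>X b. D1 X b - D2 X b) \<in> Der_neg p m n t q"
  using assms unfolding Der_neg_def
  by (auto simp: Weven_diff Wcomp_diff wbr_diff_left wbr_diff_right fun_eq_iff algebra_simps)

lemma Der_neg_cong:
  assumes D: "D \<in> Der_neg p m n t q" and eq: "\<And>X. X \<in> Weven p m n t \<Longrightarrow> D' X = D X"
  shows "D' \<in> Der_neg p m n t q"
proof -
  have "X \<in> Wcomp p m n t j \<Longrightarrow> D' X = D X" for X j
    using eq by (simp add: Wcomp_def)
  then show ?thesis
    using D unfolding Der_neg_def
    by (simp add: eq Weven_add Weven_smul wbr_Weven)
qed

section \<open>Derivations that kill the D_i-coefficient of D(x_i^(q) D_i)\<close>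

locale normalized_derivation =
  fixes p m n r :: nat and t :: "nat \<Rightarrow> nat" and D :: "(widx \<Rightarrow> 'a::field) \<Rightarrow> widx \<Rightarrow> 'a"
  assumes ch: "CHAR('a) = p" and p3: "p > 3" and m3: "m \<ge> 3" and tpos: "\<forall>i\<in>{1..m}. t i \<ge> 1"
    and r1: "r \<ge> 1"
    and Der: "D \<in> Der_neg p m n t (p ^ r)"
    and normalized: "\<And>i. i \<in> {1..m} \<Longrightarrow> p ^ r \<le> p ^ t i - 1 \<Longrightarrow>
      D (wbasis ((\<lambda>_. 0)(i := p ^ r), {}, i)) (\<lambda>_. 0, {}, i) = 0"
begin

lemma D_bracket:
  "X \<in> Weven p m n t \<Longrightarrow> Y \<in> Weven p m n t \<Longrightarrow>
    D (wbr p m n t X Y) = (\<lambda>c. wbr p m n t (D X) Y c + wbr p m n t X (D Y) c)"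
  using Der by (simp add: Der_neg_def)

lemma D_smul: "X \<in> Weven p m n t \<Longrightarrow> D (\<lambda>c. a * X c) = (\<lambda>c. a * D X c)"
  using Der by (simp add: Der_neg_def)

lemma D_add: "X \<in> Weven p m n t \<Longrightarrow> Y \<in> Weven p m n t \<Longrightarrow> D (\<lambda>c. X c + Y c) = (\<lambda>c. D X c + D Y c)"
  using Der by (simp add: Der_neg_def)

lemma D_degree: "X \<in> Wcomp p m n t j \<Longrightarrow> D X \<in> Wcomp p m n t (j - int (p ^ r))"
  using Der by (simp add: Der_neg_def)

lemma p_gt_1: "p > 1" using p3 by simp

lemma q_gt_3: "p ^ r > 3"
  using p3 r1 self_le_power[of p r] by linarith

lemma int_q_gt_3: "int (p ^ r) > 3" using q_gt_3 by linarith

lemma of_nat_q: "of_nat (p ^ r) = (0::'a)"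
  using ch r1 by (simp add: of_nat_eq_0_iff_char_dvd)

lemma of_nat_p: "of_nat p = (0::'a)"
  by (metis ch of_nat_CHAR)

lemma two_neq_0: "(2::'a) \<noteq> 0"
proof
  assume "(2::'a) = 0"
  then have "p dvd 2" using ch of_nat_eq_0_iff_char_dvd[where 'a = 'a, of 2] by simp
  then show False using p3 by (auto dest: dvd_imp_le)
qed

lemma of_nat_inj_below_p: "a < p \<Longrightarrow> b < p \<Longrightarrow> of_nat a = (of_nat b :: 'a) \<Longrightarrow> a = b"
  using ch by (simp add: of_nat_eq_iff_cong_CHAR cong_def)

lemma D_zero: "D (\<lambda>_. 0) = (\<lambda>_. 0)"
  using D_smul[OF zero_in_Weven, of 0] by simp

lemma D_Weven: "X \<in> Wcomp p m n t j \<Longrightarrow> D X \<in> Weven p m n t"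
  using D_degree by (auto simp: Wcomp_def)

lemma D_low_degree: "X \<in> Wcomp p m n t j \<Longrightarrow> j < int (p ^ r) - 1 \<Longrightarrow> D X = (\<lambda>_. 0)"
  using D_degree Wcomp_below_minus_1 by fastforce

lemma D_wbasis_low_degree: "even_widx p m n t b \<Longrightarrow> wdeg m b < int (p ^ r) - 1 \<Longrightarrow> D (wbasis b) = (\<lambda>_. 0)"
  using D_low_degree wbasis_Wcomp by blast

lemma D_wbasis_Weven: "even_widx p m n t b \<Longrightarrow> D (wbasis b) \<in> Weven p m n t"
  using D_Weven wbasis_Wcomp by blast

lemma even_widx_Dvec: "l \<in> {1..m} \<Longrightarrow> even_widx p m n t (\<lambda>_. 0, {}, l)"
  by (simp add: even_widx_def Widx_iff tau_def)

lemma D_wbasis_constant_coeffs: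
  assumes E: "even_widx p m n t E"
    and IH: "\<And>b. even_widx p m n t b \<Longrightarrow> wdeg m b < wdeg m E \<Longrightarrow> D (wbasis b) = (\<lambda>_. 0)"
    and nz: "D (wbasis E) c \<noteq> 0"
  shows "fst c = (\<lambda>_. 0)"
proof -
  let ?F = "D (wbasis E)"
  have FW: "?F \<in> Weven p m n t" using D_wbasis_Weven[OF E] .
  have cW: "c \<in> Widx p m n t" using Weven_support[OF FW nz] .
  obtain \<gamma> w s' where c: "c = (\<gamma>, w, s')" by (cases c) auto
  have EW: "E \<in> Widx p m n t" using E by (simp add: even_widx_def)
  have "\<gamma> l = 0" for l
  proof (cases "l \<in> {1..m}")
    case False then show ?thesis using cW c by (auto simp: Widx_iff Aidx_iff)
  next
    case l: True
    show ?thesis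
    proof (rule ccontr)
      assume g: "\<gamma> l \<noteq> 0"
      have DvW: "Dvec l \<in> Weven p m n t" unfolding Dvec_eq_wbasis by (rule wbasis_Weven[OF even_widx_Dvec[OF l]])
      have D0: "D (Dvec l) = (\<lambda>_. 0)" unfolding Dvec_eq_wbasis
        by (rule D_wbasis_low_degree[OF even_widx_Dvec[OF l]]) (use int_q_gt_3 p_gt_1 in \<open>simp add: wdeg_def\<close>)
      \<comment> \<open>\<open>D (D_l) = 0\<close> for degree reasons and \<open>[D_l, E]\<close> has smaller degree, so \<open>ad D_l\<close> kills \<open>D E\<close>.\<close>
      have "D (wbr p m n t (Dvec l) (wbasis E)) = (\<lambda>_. 0)"
      proof -
        have "wbr p m n t (Dvec l) (wbasis E) = (if 1 \<le> fst E l then wbasis (widx_down l E) else (\<lambda>_. (0::'a)))"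
          unfolding wbr_Dvec_eq_wshift[OF l] wshift_1_wbasis[OF EW] ..
        moreover have "D (wbasis (widx_down l E)) = (\<lambda>_. 0)" if "1 \<le> fst E l"
          using IH even_widx_lower[OF E that l] by blast
        ultimately show ?thesis using D_zero by simp
      qed
      then have "wbr p m n t (Dvec l) ?F = (\<lambda>_. 0)"
        using D_bracket[OF DvW wbasis_Weven[OF E]] D0 by (simp add: fun_eq_iff)
      then have "wshift p m n t l 1 ?F (\<gamma>(l := \<gamma> l - 1), w, s') = 0"
        unfolding wbr_Dvec_eq_wshift[OF l] by simp
      moreover have "(\<gamma>(l := \<gamma> l - 1))(l := (\<gamma>(l := \<gamma> l - 1)) l + 1) = \<gamma>" using g by (auto simp: fun_eq_iff)
      ultimately have "?F c = 0" using cW c by (simp add: wshift_def)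
      then show False using nz by simp
    qed
  qed
  then show ?thesis using c by (simp add: fun_eq_iff)
qed

lemma D_wbasis_weight:
  fixes lam :: "widx \<Rightarrow> 'a"
  assumes E: "even_widx p m n t E" and h: "even_widx p m n t h" and h0: "wdeg m h = 0"
    and lam: "\<And>b. b \<in> Widx p m n t \<Longrightarrow> wbr p m n t (wbasis h) (wbasis b) = (\<lambda>c. lam b * wbasis b c)"
    and nz: "D (wbasis E) c \<noteq> 0"
  shows "lam E = lam c"
proof -
  let ?F = "D (wbasis E)"
  have FW: "?F \<in> Weven p m n t" using D_wbasis_Weven[OF E] .
  have cW: "c \<in> Widx p m n t" using Weven_support[OF FW nz] .
  have hW: "h \<in> Widx p m n t" using h by (simp add: even_widx_def)
  have EW: "E \<in> Widx p m n t" using E by (simp add: even_widx_def)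
  have Dh: "D (wbasis h) = (\<lambda>_. 0)" by (rule D_wbasis_low_degree[OF h]) (use h0 int_q_gt_3 in linarith)
  \<comment> \<open>\<open>D h = 0\<close> for degree reasons, so \<open>D\<close> commutes with \<open>ad h\<close>.\<close>
  have "D (wbr p m n t (wbasis h) (wbasis E)) = wbr p m n t (wbasis h) ?F"
    using D_bracket[OF wbasis_Weven[OF h] wbasis_Weven[OF E]] Dh by (simp add: fun_eq_iff)
  moreover have "D (wbr p m n t (wbasis h) (wbasis E)) = (\<lambda>c. lam E * ?F c)"
    unfolding lam[OF EW] using D_smul[OF wbasis_Weven[OF E]] .
  moreover have "wbr p m n t (wbasis h) ?F c = ?F c * lam c"
  proof -
    have "wbr p m n t (wbasis h) ?F c = (\<Sum>b2\<in>Widx p m n t. ?F b2 * wbr_basis p m n t h b2 c)"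
    proof -
      have "wbr p m n t (wbasis h) ?F c = (\<Sum>b1\<in>Widx p m n t. if b1 = h then (\<Sum>b2\<in>Widx p m n t. ?F b2 * wbr_basis p m n t b1 b2 c) else 0)"
        unfolding wbr_def wbasis_def by (intro sum.cong refl) (auto simp: sum_distrib_left)
      then show ?thesis using hW finite_Widx by (simp add: sum.delta')
    qed
    also have "\<dots> = (\<Sum>b2\<in>Widx p m n t. if b2 = c then ?F b2 * lam b2 else 0)"
    proof (rule sum.cong[OF refl])
      fix b2 assume b2: "b2 \<in> Widx p m n t"
      have "wbr_basis p m n t h b2 c = lam b2 * wbasis b2 c"
        using wbr_wbasis[OF hW b2, symmetric] lam[OF b2] by (metis)
      then show "?F b2 * wbr_basis p m n t h b2 c = (if b2 = c then ?F b2 * lam b2 else 0)"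
        by (auto simp: wbasis_def)
    qed
    also have "\<dots> = ?F c * lam c" using cW finite_Widx by (simp add: sum.delta')
    finally show ?thesis .
  qed
  ultimately have "lam E * ?F c = ?F c * lam c" by metis
  then show ?thesis using nz by (simp add: mult.commute)
qed

lemma toral_Y0_widx:
  assumes a: "a \<in> {1..m}"
  shows "even_widx p m n t ((\<lambda>_. 0)(a := 1), {}, a)" "wdeg m ((\<lambda>_. 0)(a := 1), {}, a) = 0"
    "((\<lambda>_. 0)(a := 1), {}) \<in> Aidx p m n t"
proof -
  have ta: "t a \<ge> 1" using tpos a by blast
  have "p ^ t a \<ge> p" using p_gt_1 ta by (simp add: self_le_power)
  then show A: "((\<lambda>_. 0)(a := 1), {}) \<in> Aidx p m n t" using a p3 by (auto simp: Aidx_iff)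
  then show "even_widx p m n t ((\<lambda>_. 0)(a := 1), {}, a)" using a by (simp add: even_widx_def Widx_iff tau_def)
  show "wdeg m ((\<lambda>_. 0)(a := 1), {}, a) = 0"
    using a by (simp add: wdeg_def sum.remove)
qed

lemma D_wbasis_weight_Y0:
  assumes E: "even_widx p m n t E" and a: "a \<in> {1..m}" and nz: "D (wbasis E) c \<noteq> 0"
  shows "of_nat (fst E a) - (if snd (snd E) = a then 1 else 0)
    = (of_nat (fst c a) - (if snd (snd c) = a then 1 else 0) :: 'a)"
proof -
  note h = toral_Y0_widx[OF a]
  have "(\<lambda>b. of_nat (fst b a) - (if snd (snd b) = a then 1 else (0::'a))) E = (\<lambda>b. of_nat (fst b a) - (if snd (snd b) = a then 1 else 0)) c"
  proof (rule D_wbasis_weight[OF E h(1) h(2) _ nz])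
    fix b assume b: "b \<in> Widx p m n t"
    obtain \<beta> v s where bb: "b = (\<beta>, v, s)" by (cases b) auto
    show "wbr p m n t (wbasis ((\<lambda>_. 0)(a := 1), {}, a)) (wbasis b) = (\<lambda>c. (of_nat (fst b a) - (if snd (snd b) = a then 1 else 0)) * wbasis b c)"
      unfolding bb using wbr_toral_Y0[OF a b[unfolded bb] h(3)] by simp
  qed
  then show ?thesis by simp
qed

lemma D_wbasis_weight_Y1:
  assumes E: "even_widx p m n t E" and k: "k \<in> {m+1..m+n}" and nz: "D (wbasis E) c \<noteq> 0"
  shows "(if k \<in> fst (snd E) then 1 else 0) - (if snd (snd E) = k then 1 else 0)
       = ((if k \<in> fst (snd c) then 1 else 0) - (if snd (snd c) = k then 1 else 0) :: 'a)"
proof -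
  have hW: "even_widx p m n t (\<lambda>_. 0, {k}, k)" using k by (simp add: even_widx_def Widx_iff Aidx_iff tau_def)
  have h0: "wdeg m (\<lambda>_. 0, {k}, k) = 0" by (simp add: wdeg_def)
  have "(\<lambda>b. (if k \<in> fst (snd b) then 1 else 0) - (if snd (snd b) = k then 1 else (0::'a))) E
      = (\<lambda>b. (if k \<in> fst (snd b) then 1 else 0) - (if snd (snd b) = k then 1 else 0)) c"
  proof (rule D_wbasis_weight[OF E hW h0 _ nz])
    fix b assume b: "b \<in> Widx p m n t"
    obtain \<beta> v s where bb: "b = (\<beta>, v, s)" by (cases b) auto
    show "wbr p m n t (wbasis (\<lambda>_. 0, {k}, k)) (wbasis b) = (\<lambda>c. ((if k \<in> fst (snd b) then 1 else 0) - (if snd (snd b) = k then 1 else 0)) * wbasis b c)"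
      unfolding bb using wbr_toral_Y1[OF k b[unfolded bb]] by simp
  qed
  then show ?thesis by simp
qed

lemma D_wbasis_divided_power_Dvec:
  assumes i: "i \<in> {1..m}" and qi: "p ^ r \<le> p ^ t i - 1"
  shows "D (wbasis ((\<lambda>_. 0)(i := p ^ r), {}, i)) = (\<lambda>_. 0)"
proof (rule ccontr)
  let ?E = "((\<lambda>_. 0::nat)(i := p ^ r), {}, i)"
  assume "D (wbasis ?E) \<noteq> (\<lambda>_. 0)"
  then obtain c where nz: "D (wbasis ?E) c \<noteq> 0" by (meson ext)
  have EA: "((\<lambda>_. 0::nat)(i := p ^ r), {}) \<in> Aidx p m n t" using i qi by (auto simp: Aidx_iff)
  have E: "even_widx p m n t ?E" using EA i by (simp add: even_widx_def Widx_iff tau_def)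
  have dE: "wdeg m ?E = int (p ^ r) - 1" using i by (simp add: wdeg_def sum.remove)
  have IH: "D (wbasis b) = (\<lambda>_. 0)" if "even_widx p m n t b" "wdeg m b < wdeg m ?E" for b
    using D_wbasis_low_degree that dE by simp
  have g0: "fst c = (\<lambda>_. 0)" using D_wbasis_constant_coeffs[OF E IH nz] by blast
  have FW: "D (wbasis ?E) \<in> Wcomp p m n t (wdeg m ?E - int (p ^ r))" using D_degree[OF wbasis_Wcomp[OF E]] .
  obtain w s' where c: "c = (\<lambda>_. 0, w, s')" using g0 by (cases c) auto
  have cW: "c \<in> Widx p m n t" using FW nz by (auto simp: Wcomp_def Weven_def c)
  have "wdeg m c = -1" using FW nz dE unfolding c by (auto simp: Wcomp_def)
  then have "card w = 0" by (simp add: c wdeg_def)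
  moreover have "finite w" using cW by (auto simp: c Widx_iff intro: finite_odd_part)
  ultimately have w0: "w = {}" by simp
  have "(0::'a) - 1 = 0 - (if s' = i then 1 else 0)" using D_wbasis_weight_Y0[OF E i nz] of_nat_p r1 by (simp add: c power_0_left)
  then have "s' = i" by (cases "s' = i") auto
  then have "c = (\<lambda>_. 0, {}, i)" using c w0 by simp
  then show False using nz normalized[OF i qi] by simp
qed

lemma D_wbasis_saturated:
  assumes E: "even_widx p m n t E" and a: "a \<in> {1..m}" and nz: "D (wbasis E) c \<noteq> 0"
    and c0: "fst c a = 0" and sat: "fst E a = p ^ t a - 1"
  shows "snd (snd c) = a"
proof (rule ccontr)
  \<comment> \<open>\<open>p ^ t a - 1 = -1\<close> in \<open>'a\<close>, so the \<open>x_a D_a\<close>-weight of \<open>E\<close> is \<open>-1\<close> or \<open>-2\<close>, that of \<open>c\<close> is \<open>0\<close>.\<close>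
  assume ne: "snd (snd c) \<noteq> a"
  have "t a \<ge> 1" using tpos a by blast
  then have "of_nat (p ^ t a - 1) = (-1::'a)"
    using of_nat_p p_gt_1 by (simp add: of_nat_diff power_0_left)
  then have "(-1::'a) - (if snd (snd E) = a then 1 else 0) = 0"
    using D_wbasis_weight_Y0[OF E a nz] sat c0 ne by simp
  then show False using two_neq_0 by (cases "snd (snd E) = a") (auto simp: algebra_simps)
qed

lemma D_wbasis_odd_count:
  assumes E: "even_widx p m n t (\<alpha>, u, s)" and nz: "D (wbasis (\<alpha>, u, s)) (\<gamma>, w, s') \<noteq> 0"
  shows "card u + (if s' \<in> {m+1..m+n} then 1 else 0) = card w + (if s \<in> {m+1..m+n} then 1 else (0::nat))"
proof -
  have uY: "u \<subseteq> {m+1..m+n}" using E by (simp add: even_widx_def Widx_iff Aidx_iff)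
  have "(\<gamma>, w, s') \<in> Widx p m n t" using Weven_support[OF D_wbasis_Weven[OF E] nz] .
  then have wY: "w \<subseteq> {m+1..m+n}" by (simp add: Widx_iff Aidx_iff)
  have "(if k \<in> u then 1 else 0) + (if s' = k then 1 else 0) = (if k \<in> w then 1 else 0) + (if s = k then 1 else (0::nat))"
    if k: "k \<in> {m+1..m+n}" for k
  proof (rule of_nat_inj_below_p)
    have "(if k \<in> u then 1 else 0) - (if s = k then 1 else 0)
        = ((if k \<in> w then 1 else 0) - (if s' = k then 1 else 0) :: 'a)"
      using D_wbasis_weight_Y1[OF E k nz] by simp
    then show "of_nat ((if k \<in> u then 1 else 0) + (if s' = k then 1 else 0))
        = (of_nat ((if k \<in> w then 1 else 0) + (if s = k then 1 else (0::nat))) :: 'a)"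
      by (simp add: algebra_simps split: if_splits)
  qed (use p3 in auto)
  then have "(\<Sum>k\<in>{m+1..m+n}. (if k \<in> u then 1 else 0) + (if s' = k then 1 else (0::nat)))
      = (\<Sum>k\<in>{m+1..m+n}. (if k \<in> w then 1 else 0) + (if s = k then 1 else 0))"
    by (intro sum.cong) auto
  then show ?thesis
    unfolding sum.distrib sum_indicator_eq_card[OF finite_atLeastAtMost uY]
      sum_indicator_eq_card[OF finite_atLeastAtMost wY]
    by (simp only: sum.delta'[OF finite_atLeastAtMost])
qed

lemma D_wbasis_image_shape:
  assumes E: "even_widx p m n t (\<alpha>, u, s)"
    and IH: "\<And>b. even_widx p m n t b \<Longrightarrow> wdeg m b < wdeg m (\<alpha>, u, s) \<Longrightarrow> D (wbasis b) = (\<lambda>_. 0)"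
    and nz: "D (wbasis (\<alpha>, u, s)) c \<noteq> 0"
  obtains w s' where "c = (\<lambda>_. 0, w, s')" and "s' \<in> {1..m+n}"
    and "\<And>a. a \<in> {1..m} \<Longrightarrow> of_nat (\<alpha> a) - (if s = a then 1 else 0) = (0 - (if s' = a then 1 else 0) :: 'a)"
    and "int (\<Sum>j\<in>{1..m}. \<alpha> j)
      = int (p ^ r) + (if s' \<in> {m+1..m+n} then 1 else 0) - (if s \<in> {m+1..m+n} then 1 else 0)"
proof -
  obtain w s' where c: "c = (\<lambda>_. 0, w, s')"
    using D_wbasis_constant_coeffs[OF E IH nz] by (cases c) auto
  have "D (wbasis (\<alpha>, u, s)) \<in> Wcomp p m n t (wdeg m (\<alpha>, u, s) - int (p ^ r))"
    using D_degree[OF wbasis_Wcomp[OF E]] .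
  then have "c \<in> Widx p m n t" and "wdeg m c = wdeg m (\<alpha>, u, s) - int (p ^ r)"
    using nz by (auto simp: Wcomp_def Weven_def c)
  then have s': "s' \<in> {1..m+n}"
    and deg: "int (card w) = int (\<Sum>j\<in>{1..m}. \<alpha> j) + int (card u) - int (p ^ r)"
    by (simp_all add: c Widx_iff wdeg_def del: of_nat_sum)
  have "int (\<Sum>j\<in>{1..m}. \<alpha> j)
      = int (p ^ r) + (if s' \<in> {m+1..m+n} then 1 else 0) - (if s \<in> {m+1..m+n} then 1 else 0)"
    using deg D_wbasis_odd_count[OF E nz[unfolded c]] by (auto split: if_splits)
  moreover have "of_nat (\<alpha> a) - (if s = a then 1 else 0) = (0 - (if s' = a then 1 else 0) :: 'a)"
    if "a \<in> {1..m}" for a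
    using D_wbasis_weight_Y0[OF E that nz] by (simp add: c)
  ultimately show ?thesis using that c s' by blast
qed

lemma D_wbasis_eq_0_large_exponent:
  assumes E: "even_widx p m n t (\<alpha>, u, s)"
    and IH: "\<And>b. even_widx p m n t b \<Longrightarrow> wdeg m b < wdeg m (\<alpha>, u, s) \<Longrightarrow> D (wbasis b) = (\<lambda>_. 0)"
    and i: "i \<in> {1..m}" and lo: "p ^ r \<le> \<alpha> i" and hi: "\<alpha> i \<le> p ^ r + 1"
  shows "D (wbasis (\<alpha>, u, s)) = (\<lambda>_. 0)"
proof -
  define q where "q = p ^ r"
  have q3: "q > 3" and A: "(\<alpha>, u) \<in> Aidx p m n t" "s \<in> {1..m+n}"
    using q_gt_3 E by (auto simp: q_def even_widx_def Widx_iff)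
  have "\<alpha> i \<le> p ^ t i - 1" using A(1) i by (simp add: Aidx_iff)
  then have qi: "q \<le> p ^ t i - 1" using lo by (simp add: q_def)
  define G where "G = ((\<lambda>_. 0::nat)(i := q), {}::nat set, i)"
  have G: "even_widx p m n t G"
    using i qi by (simp add: G_def even_widx_def Widx_iff Aidx_iff tau_def)
  have DG: "D (wbasis G) = (\<lambda>_. 0)"
    unfolding G_def q_def using D_wbasis_divided_power_Dvec[OF i qi[unfolded q_def]] .
  define E' where "E' = (\<alpha>(i := \<alpha> i - (q - 1)), u, s)"
  have E': "even_widx p m n t E'"
    using Aidx_lower[OF A(1)] A E by (simp add: E'_def even_widx_def Widx_iff)
  have "wdeg m E = wdeg m E' + int (q - 1)" if "E = (\<alpha>, u, s)" for E
  proof -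
    have "(\<alpha>(i := \<alpha> i - (q - 1)))(i := (\<alpha>(i := \<alpha> i - (q - 1))) i + (q - 1)) = \<alpha>"
      using lo q3 by (auto simp: q_def fun_eq_iff)
    then show ?thesis using wdeg_raise[OF i, of "\<alpha>(i := \<alpha> i - (q - 1))" "q - 1" u s] that
      by (simp add: E'_def)
  qed
  then have "wdeg m E' < wdeg m (\<alpha>, u, s)" using q3 by simp
  then have DE': "D (wbasis E') = (\<lambda>_. 0)" using IH[OF E'] by blast
  have "\<alpha> i = q \<or> \<alpha> i = Suc q" using lo hi by (auto simp: q_def)
  then have binom: "of_nat (\<alpha> i choose q) = (1::'a)" "of_nat (\<alpha> i choose (\<alpha> i - (q - 1))) = (0::'a)"
    using of_nat_choose_at_multiple_of_CHAR[OF of_nat_q[folded q_def] two_neq_0] q3 by auto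
  have "wbr p m n t (wbasis G) (wbasis E') = (\<lambda>c. (of_nat (\<alpha> i choose q)
      - (if s = i then of_nat (\<alpha> i choose (\<alpha> i - (q - 1))) else 0)) * (wbasis (\<alpha>, u, s) c :: 'a))"
    unfolding G_def E'_def
    by (rule wbr_divided_power_Dvec[OF i E[unfolded even_widx_def, THEN conjunct1]])
      (use lo q3 in \<open>simp_all add: q_def\<close>)
  then have "wbr p m n t (wbasis G) (wbasis E') = (wbasis (\<alpha>, u, s) :: widx \<Rightarrow> 'a)"
    unfolding binom by simp
  then have "D (wbasis (\<alpha>, u, s)) = D (wbr p m n t (wbasis G) (wbasis E'))" by simp
  also have "\<dots> = (\<lambda>_. 0)"
    using D_bracket[OF wbasis_Weven[OF G] wbasis_Weven[OF E']] DG DE' by simp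
  finally show ?thesis .
qed

lemma D_wbasis_eq_0_transfer:
  assumes E: "even_widx p m n t (\<alpha>, u, s)"
    and IH: "\<And>b. even_widx p m n t b \<Longrightarrow> wdeg m b < wdeg m (\<alpha>, u, s) \<Longrightarrow> D (wbasis b) = (\<lambda>_. 0)"
    and l: "l \<in> {1..m}" "l \<noteq> s" "2 \<le> \<alpha> l" "\<alpha> l < p ^ r"
    and l': "l' \<in> {1..m}" "l' \<noteq> l" "\<alpha> l' < p ^ t l' - 1"
  shows "D (wbasis (\<alpha>, u, s)) = (\<lambda>_. 0)"
proof -
  have A: "(\<alpha>, u) \<in> Aidx p m n t" "s \<in> {1..m+n}" using E by (auto simp: even_widx_def Widx_iff)
  define G where "G = ((\<lambda>_. 0::nat)(l := \<alpha> l), {}::nat set, l')"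
  have G: "even_widx p m n t G"
    using A(1) l(1) l'(1) by (auto simp: G_def even_widx_def Widx_iff Aidx_iff tau_def)
  have "wdeg m G = int (\<alpha> l) - 1" using l(1) by (simp add: G_def wdeg_def sum.remove)
  then have DG: "D (wbasis G) = (\<lambda>_. 0)" using D_wbasis_low_degree[OF G] l(4) by simp
  define E' where "E' = (\<alpha>(l := 0, l' := \<alpha> l' + 1), u, s)"
  have E'A: "(\<alpha>(l := 0, l' := \<alpha> l' + 1), u) \<in> Aidx p m n t"
    using A(1) l l' unfolding Aidx_iff by auto
  have E': "even_widx p m n t E'" using E'A A E by (simp add: E'_def even_widx_def Widx_iff)
  have "(\<Sum>j\<in>{1..m}. (\<alpha>(l := 0, l' := \<alpha> l' + 1)) j) + \<alpha> l = (\<Sum>j\<in>{1..m}. \<alpha> j) + 1"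
    using l l' by (simp add: sum.remove[of _ l'] sum.remove[of _ l] Diff_insert2[symmetric] insert_commute)
  then have "wdeg m E' < wdeg m (\<alpha>, u, s)"
    using l(3) by (simp add: E'_def wdeg_def del: of_nat_sum)
  then have DE': "D (wbasis E') = (\<lambda>_. 0)" using IH[OF E'] by blast
  have "wbr p m n t (wbasis G) (wbasis E') = (wbasis (\<alpha>, u, s) :: widx \<Rightarrow> 'a)"
    unfolding G_def E'_def
    by (rule wbr_transfer_exponent[OF l(1) l'(1) l'(2)[symmetric] l(2) _ E'A]) (use E in \<open>simp add: even_widx_def\<close>)
  then have "D (wbasis (\<alpha>, u, s)) = D (wbr p m n t (wbasis G) (wbasis E'))" by simp
  also have "\<dots> = (\<lambda>_. 0)"
    using D_bracket[OF wbasis_Weven[OF G] wbasis_Weven[OF E']] DG DE' by simp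
  finally show ?thesis .
qed

lemma D_wbasis_unsaturated_index:
  assumes E: "even_widx p m n t (\<alpha>, u, s)" and nz: "D (wbasis (\<alpha>, u, s)) (\<lambda>_. 0, w, s') \<noteq> 0"
    and l: "l \<in> {1..m}"
  obtains l' where "l' \<in> {1..m}" "l' \<noteq> l" "\<alpha> l' < p ^ t l' - 1"
proof -
  have bound: "\<alpha> j \<le> p ^ t j - 1" if "j \<in> {1..m}" for j
    using E that by (auto simp: even_widx_def Widx_iff Aidx_iff)
  \<comment> \<open>A saturated exponent forces \<open>s' = j\<close>, so at most one of two indices \<open>\<noteq> l\<close> is saturated.\<close>
  have saturated: "s' = j" if "j \<in> {1..m}" "\<alpha> j = p ^ t j - 1" for j
    using D_wbasis_saturated[OF E that(1) nz] that(2) by simp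
  define l1 where "l1 = (if l = 1 then 2 else (1::nat))"
  define l2 where "l2 = (if l = 3 then 2 else (3::nat))"
  have l12: "l1 \<in> {1..m}" "l2 \<in> {1..m}" "l1 \<noteq> l" "l2 \<noteq> l" "l1 \<noteq> l2"
    using m3 by (auto simp: l1_def l2_def)
  have "\<alpha> l1 < p ^ t l1 - 1 \<or> \<alpha> l2 < p ^ t l2 - 1"
    using saturated[OF l12(1)] saturated[OF l12(2)] bound[OF l12(1)] bound[OF l12(2)] l12(5)
    by linarith
  then show ?thesis using that l12 by blast
qed

lemma small_exponents_impossible:
  assumes s: "s \<in> {1..m+n}" and s': "s' \<in> {1..m+n}"
    and weights: "\<And>a. a \<in> {1..m} \<Longrightarrow>
      of_nat (\<alpha> a) - (if s = a then 1 else 0) = (0 - (if s' = a then 1 else 0) :: 'a)"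
    and degree: "int (\<Sum>j\<in>{1..m}. \<alpha> j)
      = int (p ^ r) + (if s' \<in> {m+1..m+n} then 1 else 0) - (if s \<in> {m+1..m+n} then 1 else 0)"
    and below_q: "\<And>j. j \<in> {1..m} \<Longrightarrow> \<alpha> j < p ^ r"
    and at_most_1: "\<And>l. l \<in> {1..m} \<Longrightarrow> l \<noteq> s \<Longrightarrow> \<alpha> l \<le> 1"
  shows False
proof -
  have vanish: "\<alpha> l = 0 \<and> s' \<noteq> l" if l: "l \<in> {1..m}" "l \<noteq> s" for l
  proof -
    have "of_nat (\<alpha> l + (if s' = l then 1 else 0)) = (of_nat 0 :: 'a)"
      using weights[OF l(1)] l(2) by (auto split: if_splits simp: algebra_simps)
    then have "\<alpha> l + (if s' = l then 1 else 0) = 0"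
      by (rule of_nat_inj_below_p[rotated 2]) (use at_most_1[OF l] p3 in auto)
    then show ?thesis by (auto split: if_splits)
  qed
  have "(\<Sum>j\<in>{1..m}. \<alpha> j) = (\<Sum>j\<in>{1..m}. if j = s then \<alpha> j else 0)"
    using vanish by (intro sum.cong) auto
  then have sum: "(\<Sum>j\<in>{1..m}. \<alpha> j) = (if s \<in> {1..m} then \<alpha> s else 0)"
    by (simp add: sum.delta')
  show False
  proof (cases "s \<in> {1..m}")
    case True
    then have "s' \<in> {1..m} \<Longrightarrow> s' = s" using vanish by blast
    then show False using degree sum True s' below_q[OF True] by (auto simp del: of_nat_sum of_nat_power split: if_splits)
  next
    case False
    then have "(if s \<in> {m+1..m+n} then 1 else 0) = (1::int)" and "int (\<Sum>j\<in>{1..m}. \<alpha> j) = 0"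
      using s sum by auto
    moreover have "0 \<le> (if s' \<in> {m+1..m+n} then 1 else 0 :: int)" by simp
    ultimately show False using degree int_q_gt_3 by linarith
  qed
qed

lemma D_wbasis_step:
  assumes E: "even_widx p m n t E"
    and IH: "\<And>b. even_widx p m n t b \<Longrightarrow> wdeg m b < wdeg m E \<Longrightarrow> D (wbasis b) = (\<lambda>_. 0)"
  shows "D (wbasis E) = (\<lambda>_. 0)"
proof (rule ccontr)
  obtain \<alpha> u s where E_eq: "E = (\<alpha>, u, s)" by (cases E) auto
  note E = E[unfolded E_eq] and IH = IH[unfolded E_eq]
  assume "D (wbasis E) \<noteq> (\<lambda>_. 0)"
  then obtain c where nz: "D (wbasis (\<alpha>, u, s)) c \<noteq> 0" unfolding E_eq by (meson ext)
  obtain w s' where c: "c = (\<lambda>_. 0, w, s')" and s': "s' \<in> {1..m+n}"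
    and weights: "\<And>a. a \<in> {1..m} \<Longrightarrow>
      of_nat (\<alpha> a) - (if s = a then 1 else 0) = (0 - (if s' = a then 1 else 0) :: 'a)"
    and degree: "int (\<Sum>j\<in>{1..m}. \<alpha> j)
      = int (p ^ r) + (if s' \<in> {m+1..m+n} then 1 else 0) - (if s \<in> {m+1..m+n} then 1 else 0)"
    using D_wbasis_image_shape[OF E IH nz] by blast
  have s: "s \<in> {1..m+n}" using E by (simp add: even_widx_def Widx_iff)
  have "D (wbasis (\<alpha>, u, s)) = (\<lambda>_. 0)"
  proof (cases "\<exists>i\<in>{1..m}. p ^ r \<le> \<alpha> i")
    case True
    then obtain i where i: "i \<in> {1..m}" "p ^ r \<le> \<alpha> i" by blast
    have "\<alpha> i \<le> (\<Sum>j\<in>{1..m}. \<alpha> j)" using i(1) by (intro member_le_sum) auto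
    then have "\<alpha> i \<le> p ^ r + 1" using degree by (simp del: of_nat_sum of_nat_power split: if_splits)
    then show ?thesis using D_wbasis_eq_0_large_exponent[OF E IH i] by blast
  next
    case False
    then have below_q: "\<And>j. j \<in> {1..m} \<Longrightarrow> \<alpha> j < p ^ r" by (simp add: not_le)
    show ?thesis
    proof (cases "\<exists>l\<in>{1..m}. l \<noteq> s \<and> 2 \<le> \<alpha> l")
      case True
      then obtain l where l: "l \<in> {1..m}" "l \<noteq> s" "2 \<le> \<alpha> l" by blast
      obtain l' where "l' \<in> {1..m}" "l' \<noteq> l" "\<alpha> l' < p ^ t l' - 1"
        using D_wbasis_unsaturated_index[OF E nz[unfolded c] l(1)] .
      then show ?thesis using D_wbasis_eq_0_transfer[OF E IH l below_q[OF l(1)]] by blast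
    next
      case False
      then have "\<And>l. l \<in> {1..m} \<Longrightarrow> l \<noteq> s \<Longrightarrow> \<alpha> l \<le> 1" by fastforce
      then show ?thesis using small_exponents_impossible[OF s s' weights degree below_q] by blast
    qed
  qed
  then show False using nz by simp
qed

lemma D_wbasis_eq_0:
  assumes "even_widx p m n t b"
  shows "D (wbasis b) = (\<lambda>_. 0)"
  using assms
proof (induction "nat (wdeg m b + 1)" arbitrary: b rule: less_induct)
  case less
  show ?case
  proof (rule D_wbasis_step[OF less.prems])
    fix b' assume b': "even_widx p m n t b'" "wdeg m b' < wdeg m b"
    then have "nat (wdeg m b' + 1) < nat (wdeg m b + 1)" using wdeg_ge_minus_1[of m b'] by simp
    then show "D (wbasis b') = (\<lambda>_. 0)" using less.hyps b'(1) by blast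
  qed
qed

lemma D_eq_0_on_Weven:
  assumes X: "X \<in> Weven p m n t"
  shows "D X = (\<lambda>_. 0)"
proof -
  have M: "K \<subseteq> Widx p m n t \<longrightarrow> (\<lambda>c. \<Sum>b\<in>K. X b * wbasis b c) \<in> Weven p m n t \<and> D (\<lambda>c. \<Sum>b\<in>K. X b * wbasis b c) = (\<lambda>_. 0)"
    if "finite K" for K
    using that
  proof (induction K rule: finite_induct)
    case empty
    show ?case using zero_in_Weven D_zero by simp
  next
    case (insert b K)
    show ?case
    proof
      assume sub: "insert b K \<subseteq> Widx p m n t"
      let ?T = "\<lambda>c. X b * wbasis b c"
      let ?R = "\<lambda>c. \<Sum>b\<in>K. X b * wbasis b c"
      have R: "?R \<in> Weven p m n t" "D ?R = (\<lambda>_. 0)" using insert.IH sub by simp_all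
      have T: "?T \<in> Weven p m n t \<and> D ?T = (\<lambda>_. 0)"
      proof (cases "X b = 0")
        case True
        then show ?thesis using zero_in_Weven D_zero by simp
      next
        case False
        obtain \<beta> v s where bb: "b = (\<beta>, v, s)" by (cases b) auto
        have "even_widx p m n t b" using X False sub by (auto simp: Weven_def even_widx_def bb)
        then have "wbasis b \<in> Weven p m n t" "D (wbasis b) = (\<lambda>_. 0)" using wbasis_Weven D_wbasis_eq_0 by blast+
        then show ?thesis using D_smul[of "wbasis b" "X b"] Weven_smul by auto
      qed
      have e: "(\<lambda>c. \<Sum>b\<in>insert b K. X b * wbasis b c) = (\<lambda>c. ?T c + ?R c)"
        using insert.hyps by (simp add: fun_eq_iff)
      show "(\<lambda>c. \<Sum>b\<in>insert b K. X b * wbasis b c) \<in> Weven p m n t \<and> D (\<lambda>c. \<Sum>b\<in>insert b K. X b * wbasis b c) = (\<lambda>_. 0)"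
        unfolding e using D_add[of ?T ?R] T R Weven_add[of ?T p m n t ?R] by simp
    qed
  qed
  have "D (\<lambda>c. \<Sum>b\<in>Widx p m n t. X b * wbasis b c) = (\<lambda>_. 0)" using M[OF finite_Widx] by simp
  then show ?thesis unfolding Weven_expand[OF X] .
qed

end

lemma normalized_derivation_subtract:
  fixes D :: "(widx \<Rightarrow> 'a::field) \<Rightarrow> widx \<Rightarrow> 'a"
  assumes ch: "CHAR('a) = p" and "p > 3" "m \<ge> 3" "\<forall>i\<in>{1..m}. t i \<ge> 1" "r \<ge> 1"
    and D: "D \<in> Der_neg p m n t (p ^ r)"
  defines "c i \<equiv> D (wbasis ((\<lambda>_. 0)(i := p ^ r), {}, i)) (\<lambda>_. 0, {}, i)"
  shows "normalized_derivation p m n r t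
    (\<lambda>X b. D X b - (\<Sum>i\<in>{1..m}. c i * (wbr p m n t (Dvec i) ^^ p ^ r) X b))"
proof
  have p: "0 < p" using assms(2) by simp
  show "(\<lambda>X b. D X b - (\<Sum>i\<in>{1..m}. c i * (wbr p m n t (Dvec i) ^^ p ^ r) X b)) \<in> Der_neg p m n t (p ^ r)"
    by (intro Der_neg_diff[OF D] Der_neg_lincomb funpow_wbr_Dvec_in_Der_neg[OF _ ch p])
next
  fix i assume i: "i \<in> {1..m}" and qi: "p ^ r \<le> p ^ t i - 1"
  have summand: "c l * (wbr p m n t (Dvec l) ^^ p ^ r) (wbasis ((\<lambda>_. 0)(i := p ^ r), {}, i)) (\<lambda>_. 0, {}, i)
      = (if l = i then c l else 0)" if l: "l \<in> {1..m}" for l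
  proof -
    have val: "(wbr p m n t (Dvec l) ^^ p ^ r) (wbasis ((\<lambda>_. 0)(i := p ^ r), {}, i)) (\<lambda>_. 0, {}, i)
        = (if l = i then 1 else 0)"
      using funpow_wbr_Dvec_divided_power_Dvec[where p = p and t = t and n = n and q = "p ^ r", OF l i _ qi]
        assms(2) by simp
    show ?thesis unfolding val by simp
  qed
  have "(\<Sum>l\<in>{1..m}. c l * (wbr p m n t (Dvec l) ^^ p ^ r) (wbasis ((\<lambda>_. 0)(i := p ^ r), {}, i))
      (\<lambda>_. 0, {}, i)) = (\<Sum>l\<in>{1..m}. if l = i then c l else 0)"
    using summand by (rule sum.cong[OF refl])
  also have "\<dots> = c i" using i by simp
  finally show "D (wbasis ((\<lambda>_. 0)(i := p ^ r), {}, i)) (\<lambda>_. 0, {}, i)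
      - (\<Sum>l\<in>{1..m}. c l * (wbr p m n t (Dvec l) ^^ p ^ r) (wbasis ((\<lambda>_. 0)(i := p ^ r), {}, i))
          (\<lambda>_. 0, {}, i)) = 0"
    by (simp add: c_def)
qed (use assms in auto)

theorem proposition3p2p10:
  fixes p m n r :: nat and t :: "nat \<Rightarrow> nat"
    and D :: "((nat \<Rightarrow> nat) \<times> nat set \<times> nat \<Rightarrow> 'a::field) \<Rightarrow> ((nat \<Rightarrow> nat) \<times> nat set \<times> nat \<Rightarrow> 'a)"
  assumes "CHAR('a) = p" and "p > 3"
    and "m \<ge> 3" and "n \<ge> 3"
    and "\<forall>i\<in>{1..m}. t i \<ge> 1"
    and "r \<ge> 1"
  shows "D \<in> Der_neg p m n t (p ^ r) \<longleftrightarrow>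
         (\<exists>c :: nat \<Rightarrow> 'a. \<forall>X\<in>Weven p m n t.
             D X = (\<lambda>b. \<Sum>i\<in>{1..m}. c i * ((wbr p m n t (Dvec i)) ^^ (p ^ r)) X b))"
proof
  assume "D \<in> Der_neg p m n t (p ^ r)"
  then interpret normalized_derivation p m n r t
    "\<lambda>X b. D X b - (\<Sum>i\<in>{1..m}. D (wbasis ((\<lambda>_. 0)(i := p ^ r), {}, i)) (\<lambda>_. 0, {}, i)
                                  * (wbr p m n t (Dvec i) ^^ p ^ r) X b)"
    using normalized_derivation_subtract assms by blast
  show "\<exists>c. \<forall>X\<in>Weven p m n t. D X = (\<lambda>b. \<Sum>i\<in>{1..m}. c i * (wbr p m n t (Dvec i) ^^ p ^ r) X b)"
  proof (intro exI ballI)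
    fix X :: "widx \<Rightarrow> 'a" assume "X \<in> Weven p m n t"
    from D_eq_0_on_Weven[OF this]
    show "D X = (\<lambda>b. \<Sum>i\<in>{1..m}. D (wbasis ((\<lambda>_. 0)(i := p ^ r), {}, i)) (\<lambda>_. 0, {}, i)
                                  * (wbr p m n t (Dvec i) ^^ p ^ r) X b)"
      by (simp add: fun_eq_iff)
  qed
next
  assume "\<exists>c. \<forall>X\<in>Weven p m n t. D X = (\<lambda>b. \<Sum>i\<in>{1..m}. c i * (wbr p m n t (Dvec i) ^^ p ^ r) X b)"
  then obtain c where "\<And>X. X \<in> Weven p m n t \<Longrightarrow> D X = (\<lambda>b. \<Sum>i\<in>{1..m}. c i * (wbr p m n t (Dvec i) ^^ p ^ r) X b)"
    by blast
  moreover have "(\<lambda>X b. \<Sum>i\<in>{1..m}. c i * (wbr p m n t (Dvec i) ^^ p ^ r) X b) \<in> Der_neg p m n t (p ^ r)"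
    using assms(2) by (intro Der_neg_lincomb funpow_wbr_Dvec_in_Der_neg[OF _ assms(1)]) simp_all
  ultimately show "D \<in> Der_neg p m n t (p ^ r)"
    by (rule Der_neg_cong[rotated])
qed

end
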